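(* For every $\alpha>1$, with $\lambda=\alpha(\alpha-1)/2$, \[ \mathbb E\bigl[e^{-\lambda L^{main}}\,\big|\,\mathbf{COND}\bigr]=n^{-(\alpha-1)/2+o(1)}\qquad(n\to\infty). \]
   Context: For $n$ large let $A=\lfloor\ln^{10}n\rfloor$. Let $\xi_1,\dots,\xi_{2n-2}$ be i.i.d. uniform on $\{-1,+1\}$, $S_t=\sum_{i=1}^t\xi_i$ ($S_0=0$). $\mathbf{COND}$ is the event $\{S_{2A-2}=0\}\cap\{S_{2n-2}=0\}$, and $L^{main}=\sum_{i=2A-1}^{2n-2}S_i^2/i^2$. *)

theory Defs
  imports "HOL-Probability.Probability"
begin

definition Apar :: "nat \<Rightarrow> nat" where
  "Apar n = nat \<lfloor>(ln (real n)) ^ 10\<rfloor>"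

definition walks :: "nat \<Rightarrow> (nat \<Rightarrow> int) set" where
  "walks n = PiE {1..2*n-2} (\<lambda>_. {-1, 1})"

definition walk_pmf :: "nat \<Rightarrow> (nat \<Rightarrow> int) pmf" where
  "walk_pmf n = pmf_of_set (walks n)"

definition S :: "(nat \<Rightarrow> int) \<Rightarrow> nat \<Rightarrow> int" where
  "S xi t = (\<Sum>i\<in>{1..t}. xi i)"

definition COND :: "nat \<Rightarrow> (nat \<Rightarrow> int) set" where
  "COND n = {xi. S xi (2 * Apar n - 2) = 0 \<and> S xi (2*n-2) = 0}"

definition Lmain :: "nat \<Rightarrow> (nat \<Rightarrow> int) \<Rightarrow> real" where
  "Lmain n xi = (\<Sum>i\<in>{2 * Apar n - 1..2*n-2}. (real_of_int (S xi i))^2 / (real i)^2)"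

definition condE :: "real \<Rightarrow> nat \<Rightarrow> real" where
  "condE lam n = measure_pmf.expectation (cond_pmf (walk_pmf n) (COND n))
                    (\<lambda>xi. exp (- lam * Lmain n xi))"

end

theory Submission
  imports Defs "HOL-Real_Asymp.Real_Asymp"
begin

text \<open>Summing over sign paths turns the conditional expectation into the solution of a backward
  recursion for the walk pinned at \<open>0\<close> at the times \<open>t0 = 2 A - 2\<close> and \<open>N = 2 n - 2\<close>, with weights
  \<open>exp (- \<lambda> S_i\<^sup>2 / i\<^sup>2)\<close> after \<open>t0\<close>, divided by the probability \<open>P (S_(N-t0) = 0)\<close>.  With
  \<open>b = (\<alpha> - 1) / 2\<close> one has \<open>\<lambda> = b + 2 b\<^sup>2\<close>, and the Gaussian profiles \<open>s^c exp (- c x\<^sup>2 / s)\<close> are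
  nearly invariant under one penalised step backwards: they are supersolutions for \<open>c < b\<close> and,
  after dividing out the pinning probability, subsolutions for \<open>c = b\<close> up to errors summable like
  \<open>s^(-3/2)\<close>.  Comparing the solution with these profiles on \<open>[t0, T]\<close>, \<open>T = N - 2 (n div K0)\<close>, and
  using crude walk estimates on the final stretch, bounds the conditional expectation below by a
  multiple of \<open>T^(-b)\<close> and above by multiples of \<open>(t0 / T)^c\<close> for every \<open>c < b\<close>; since
  \<open>n \<le> T \<le> 2 n\<close> and \<open>t0 = O(ln n ^ 10)\<close>, it is \<open>n^(-b + o(1))\<close>.\<close>

section \<open>Weighted transfer operators\<close>

text \<open>\<open>witer w G s k x\<close> is the mean, over the \<open>2^k\<close> sign paths of a walk started at \<open>x\<close> at time \<open>s\<close>,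
  of the final value \<open>G\<close> times the weights \<open>w i\<close> at the positions visited at times \<open>s < i \<le> s + k\<close>
  (lemma \<open>witer_path_sum\<close>).\<close>

definition wstep :: "(nat \<Rightarrow> int \<Rightarrow> real) \<Rightarrow> nat \<Rightarrow> (int \<Rightarrow> real) \<Rightarrow> int \<Rightarrow> real" where
  "wstep w s g x = (w (Suc s) (x + 1) * g (x + 1) + w (Suc s) (x - 1) * g (x - 1)) / 2"

fun witer :: "(nat \<Rightarrow> int \<Rightarrow> real) \<Rightarrow> (int \<Rightarrow> real) \<Rightarrow> nat \<Rightarrow> nat \<Rightarrow> int \<Rightarrow> real" where
  "witer w G s 0 = G"
| "witer w G s (Suc k) = wstep w s (witer w G (Suc s) k)"

abbreviation unit_weight :: "nat \<Rightarrow> int \<Rightarrow> real" where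
  "unit_weight \<equiv> \<lambda>_ _. 1"

definition delta0 :: "int \<Rightarrow> real" where
  "delta0 y = (if y = 0 then 1 else 0)"

lemma witer_add: "witer w G s (k1 + k2) = witer w (witer w G (s + k1) k2) s k1"
  by (induction k1 arbitrary: s) auto

lemma wstep_scale: "wstep w s (\<lambda>y. a * g y) x = a * wstep w s g x"
  by (simp add: wstep_def algebra_simps)

lemma wstep_diff: "wstep w s (\<lambda>y. f y - g y) x = wstep w s f x - wstep w s g x"
  by (simp add: wstep_def algebra_simps diff_divide_distrib add_divide_distrib)

lemma witer_scale: "witer w (\<lambda>y. a * G y) s k x = a * witer w G s k x"
  by (induction k arbitrary: s x) (auto simp: wstep_def algebra_simps)

lemma wstep_mono:
  assumes "\<And>i y. w i y \<ge> 0" "\<And>y. g y \<le> g' y"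
  shows "wstep w s g x \<le> wstep w s g' x"
  unfolding wstep_def using assms
  by (intro divide_right_mono add_mono mult_left_mono) auto

lemma witer_ge_subsolution:
  assumes w: "\<And>i y. w i y \<ge> 0"
    and step: "\<And>j x. j < k \<Longrightarrow> f (s + j) x \<le> wstep w (s + j) (f (s + j + 1)) x"
    and final: "\<And>x. f (s + k) x \<le> G x"
  shows "f s x \<le> witer w G s k x"
  using step final
proof (induction k arbitrary: s x)
  case 0
  then show ?case by simp
next
  case (Suc k)
  have IH: "f (Suc s) y \<le> witer w G (Suc s) k y" for y
    using Suc.IH[of "Suc s" y] Suc.prems by (metis add_Suc add_Suc_shift Suc_less_eq)
  have "f s x \<le> wstep w s (f (s + 1)) x" using Suc.prems(1)[of 0 x] by simp
  also have "\<dots> \<le> wstep w s (witer w G (Suc s) k) x"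
    using IH by (intro wstep_mono w) auto
  finally show ?case by simp
qed

lemma witer_le_supersolution:
  assumes w: "\<And>i y. w i y \<ge> 0"
    and step: "\<And>j x. j < k \<Longrightarrow> wstep w (s + j) (f (s + j + 1)) x \<le> f (s + j) x"
    and final: "\<And>x. G x \<le> f (s + k) x"
  shows "witer w G s k x \<le> f s x"
  using step final
proof (induction k arbitrary: s x)
  case 0
  then show ?case by simp
next
  case (Suc k)
  have IH: "witer w G (Suc s) k y \<le> f (Suc s) y" for y
    using Suc.IH[of "Suc s" y] Suc.prems by (metis add_Suc add_Suc_shift Suc_less_eq)
  have "witer w G s (Suc k) x = wstep w s (witer w G (Suc s) k) x" by simp
  also have "\<dots> \<le> wstep w s (f (s + 1)) x"
    using IH by (intro wstep_mono w) auto
  also have "\<dots> \<le> f s x" using Suc.prems(1)[of 0 x] by simp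
  finally show ?case .
qed

lemma witer_cong_weight:
  assumes "\<And>i y. s < i \<Longrightarrow> i \<le> s + k \<Longrightarrow> w i y = w' i y"
  shows "witer w G s k x = witer w' G s k x"
  using assms
proof (induction k arbitrary: s x)
  case 0
  then show ?case by simp
next
  case (Suc k)
  have "witer w G (Suc s) k y = witer w' G (Suc s) k y" for y
    using Suc.IH[of "Suc s" y] Suc.prems by auto
  moreover have "w (Suc s) y = w' (Suc s) y" for y using Suc.prems by auto
  ultimately show ?case by (simp add: wstep_def)
qed

lemma witer_unit_weight_shift: "witer unit_weight G s k x = witer unit_weight G s' k x"
proof (induction k arbitrary: s s' x)
  case 0
  then show ?case by simp
next
  case (Suc k)
  have "witer unit_weight G (Suc s) k = witer unit_weight G (Suc s') k" using Suc.IH by blast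
  then show ?case by (simp add: wstep_def)
qed

lemma witer_last_weight:
  assumes "\<And>i y. s < i \<Longrightarrow> i \<le> s + k \<Longrightarrow> w i y = 1"
  shows "witer w H s (Suc k) x = witer unit_weight (\<lambda>z. w (s + Suc k) z * H z) s (Suc k) x"
proof -
  have "witer w H s (Suc k) x = witer w (witer w H (s + k) 1) s k x"
    using witer_add[of w H s k 1] by simp
  also have "\<dots> = witer unit_weight (witer w H (s + k) 1) s k x"
    by (rule witer_cong_weight) (use assms in auto)
  also have "witer w H (s + k) 1 = witer unit_weight (\<lambda>z. w (s + Suc k) z * H z) (s + k) 1"
    by (auto simp: wstep_def fun_eq_iff)
  also have "witer unit_weight (witer unit_weight (\<lambda>z. w (s + Suc k) z * H z) (s + k) 1) s k x
       = witer unit_weight (\<lambda>z. w (s + Suc k) z * H z) s (Suc k) x"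
    using witer_add[of unit_weight "\<lambda>z. w (s + Suc k) z * H z" s k 1] by simp
  finally show ?thesis .
qed

lemma sum_PiE_insert:
  fixes F :: "(nat \<Rightarrow> int) \<Rightarrow> real"
  assumes "a \<notin> I" "finite I"
  shows "(\<Sum>\<eta>\<in>PiE (insert a I) (\<lambda>_. Y). F \<eta>) = (\<Sum>y\<in>Y. \<Sum>g\<in>PiE I (\<lambda>_. Y). F (g(a := y)))"
proof -
  have inj: "inj_on (\<lambda>(y, g). g(a := y)) (Y \<times> PiE I (\<lambda>_. Y))"
  proof (rule inj_onI, clarify)
    fix y g y' g'
    assume h: "y \<in> Y" "g \<in> PiE I (\<lambda>_. Y)" "y' \<in> Y" "g' \<in> PiE I (\<lambda>_. Y)" "g(a := y) = g'(a := y')"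
    have "y = y'" using fun_cong[OF h(5), of a] by simp
    moreover have "g = g'"
    proof
      fix z show "g z = g' z"
      proof (cases "z = a")
        case True
        have "g a = undefined" "g' a = undefined" using h(2,4) assms(1) by (auto intro: PiE_arb)
        then show ?thesis using True by simp
      next
        case False then show ?thesis using fun_cong[OF h(5), of z] by simp
      qed
    qed
    ultimately show "y = y' \<and> g = g'" by simp
  qed
  have "(\<Sum>\<eta>\<in>PiE (insert a I) (\<lambda>_. Y). F \<eta>) = (\<Sum>\<eta>\<in>(\<lambda>(y, g). g(a := y)) ` (Y \<times> PiE I (\<lambda>_. Y)). F \<eta>)"
    by (simp only: PiE_insert_eq)
  also have "\<dots> = (\<Sum>p\<in>Y \<times> PiE I (\<lambda>_. Y). F ((\<lambda>(y, g). g(a := y)) p))"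
    by (rule sum.reindex[OF inj, unfolded comp_def])
  also have "\<dots> = (\<Sum>y\<in>Y. \<Sum>g\<in>PiE I (\<lambda>_. Y). F (g(a := y)))"
    by (simp add: sum.cartesian_product split_def)
  finally show ?thesis .
qed

lemma sum_upd_first:
  fixes g :: "nat \<Rightarrow> int"
  assumes "Suc s \<le> i"
  shows "(\<Sum>j\<in>{s<..i}. (g(Suc s := y)) j) = y + (\<Sum>j\<in>{Suc s<..i}. g j)"
proof -
  have "{s<..i} = insert (Suc s) {Suc s<..i}" using assms by auto
  moreover have "(\<Sum>j\<in>{Suc s<..i}. (g(Suc s := y)) j) = (\<Sum>j\<in>{Suc s<..i}. g j)"
    by (intro sum.cong) auto
  ultimately show ?thesis by simp
qed

lemma witer_path_sum:
  "(\<Sum>\<eta>\<in>PiE {s<..s + k} (\<lambda>_. {-1, 1}).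
      G (x + (\<Sum>j\<in>{s<..s + k}. \<eta> j)) * (\<Prod>i\<in>{s<..s + k}. w i (x + (\<Sum>j\<in>{s<..i}. \<eta> j))))
   = 2 ^ k * witer w G s k x"
proof (induction k arbitrary: s x)
  case 0
  then show ?case by simp
next
  case (Suc k)
  let ?P = "PiE {Suc s<..Suc s + k} (\<lambda>_. {-1::int, 1})"
  let ?term = "\<lambda>x \<eta>. G (x + (\<Sum>j\<in>{Suc s<..Suc s + k}. \<eta> j)) *
      (\<Prod>i\<in>{Suc s<..Suc s + k}. w i (x + (\<Sum>j\<in>{Suc s<..i}. \<eta> j)))"
  have I: "{s<..s + Suc k} = insert (Suc s) {Suc s<..Suc s + k}" by auto
  then have P: "PiE {s<..s + Suc k} (\<lambda>_. {-1::int, 1}) = PiE (insert (Suc s) {Suc s<..Suc s + k}) (\<lambda>_. {-1, 1})"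
    by (simp only:)
  have first_step: "G (x + (\<Sum>j\<in>{s<..s + Suc k}. (g(Suc s := y)) j)) *
        (\<Prod>i\<in>{s<..s + Suc k}. w i (x + (\<Sum>j\<in>{s<..i}. (g(Suc s := y)) j)))
      = w (Suc s) (x + y) * ?term (x + y) g" for g y
  proof -
    have "(\<Prod>i\<in>{s<..s + Suc k}. w i (x + (\<Sum>j\<in>{s<..i}. (g(Suc s := y)) j)))
        = (\<Prod>i\<in>insert (Suc s) {Suc s<..Suc s + k}. w i ((x + y) + (\<Sum>j\<in>{Suc s<..i}. g j)))"
      unfolding I by (intro prod.cong refl) (auto simp del: fun_upd_apply simp add: sum_upd_first add.assoc)
    moreover have "(\<Sum>j\<in>{s<..s + Suc k}. (g(Suc s := y)) j) = y + (\<Sum>j\<in>{Suc s<..Suc s + k}. g j)"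
      using sum_upd_first[of s "s + Suc k" g y] by simp
    ultimately show ?thesis by (simp add: add.assoc)
  qed
  have "(\<Sum>\<eta>\<in>PiE {s<..s + Suc k} (\<lambda>_. {-1, 1}).
      G (x + (\<Sum>j\<in>{s<..s + Suc k}. \<eta> j)) * (\<Prod>i\<in>{s<..s + Suc k}. w i (x + (\<Sum>j\<in>{s<..i}. \<eta> j))))
      = (\<Sum>y\<in>{-1, 1}. \<Sum>g\<in>?P.
          G (x + (\<Sum>j\<in>{s<..s + Suc k}. (g(Suc s := y)) j)) *
          (\<Prod>i\<in>{s<..s + Suc k}. w i (x + (\<Sum>j\<in>{s<..i}. (g(Suc s := y)) j))))"
    unfolding P by (rule sum_PiE_insert) simp_all
  also have "\<dots> = (\<Sum>y\<in>{-1, 1}. \<Sum>g\<in>?P. w (Suc s) (x + y) * ?term (x + y) g)"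
    by (simp only: first_step)
  also have "\<dots> = (\<Sum>y\<in>{-1::int, 1}. w (Suc s) (x + y) * (2 ^ k * witer w G (Suc s) k (x + y)))"
    by (simp only: sum_distrib_left[symmetric] Suc.IH)
  also have "\<dots> = 2 ^ Suc k * witer w G s (Suc k) x"
    by (simp add: wstep_def algebra_simps)
  finally show ?case .
qed


section \<open>Simple random walk probabilities\<close>

definition walk_prob :: "nat \<Rightarrow> int \<Rightarrow> real" where
  "walk_prob L x = witer unit_weight delta0 0 L x"

lemma witer_unit_weight_delta0: "witer unit_weight delta0 s L x = walk_prob L x"
  unfolding walk_prob_def by (rule witer_unit_weight_shift)

lemma walk_prob_0: "walk_prob 0 x = delta0 x"
  by (simp add: walk_prob_def)

lemma walk_prob_Suc: "walk_prob (Suc L) x = (walk_prob L (x + 1) + walk_prob L (x - 1)) / 2"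
  using witer_unit_weight_delta0[of "Suc 0" L] by (simp add: walk_prob_def wstep_def)

lemma walk_prob_nonneg: "walk_prob L x \<ge> 0"
  by (induction L arbitrary: x) (auto simp: walk_prob_0 walk_prob_Suc delta0_def)

lemma walk_prob_eq_0: "odd (int L + x) \<or> x < - int L \<or> x > int L \<Longrightarrow> walk_prob L x = 0"
proof (induction L arbitrary: x)
  case 0
  then show ?case by (auto simp: walk_prob_0 delta0_def)
next
  case (Suc L)
  have "walk_prob L (x + 1) = 0" "walk_prob L (x - 1) = 0"
    by (rule Suc.IH; use Suc.prems in auto)+
  then show ?case by (simp add: walk_prob_Suc)
qed

lemma walk_prob_binomial: "walk_prob L (2 * int k - int L) = real (L choose k) / 2 ^ L"
proof (induction L arbitrary: k)
  case 0
  then show ?case by (cases k) (auto simp: walk_prob_0 delta0_def)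
next
  case (Suc L)
  show ?case
  proof (cases k)
    case 0
    have "walk_prob L (2 * int k - int (Suc L) + 1) = 1 / 2 ^ L"
      using Suc.IH[of 0] 0 by simp
    moreover have "walk_prob L (2 * int k - int (Suc L) - 1) = 0"
      by (rule walk_prob_eq_0) (use 0 in auto)
    ultimately show ?thesis using 0 by (simp add: walk_prob_Suc)
  next
    case (Suc j)
    have "walk_prob L (2 * int k - int (Suc L) + 1) = real (L choose k) / 2 ^ L"
      using Suc.IH[of k] by (simp add: algebra_simps)
    moreover have "walk_prob L (2 * int k - int (Suc L) - 1) = real (L choose j) / 2 ^ L"
      using Suc.IH[of j] Suc by (simp add: algebra_simps)
    ultimately show ?thesis using Suc by (simp add: walk_prob_Suc field_simps)
  qed
qed

lemma walk_prob_cases: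
  obtains "walk_prob L x = 0" | k where "k \<le> L" "x = 2 * int k - int L"
proof (cases "odd (int L + x) \<or> x < - int L \<or> x > int L")
  case True
  then show ?thesis using walk_prob_eq_0 that(1) by blast
next
  case False
  then have "even (int L + x)" by simp
  then obtain m where m: "int L + x = 2 * m" by (rule evenE)
  have "0 \<le> m" "m \<le> int L" using False m by auto
  then show ?thesis using that(2)[of "nat m"] m by auto
qed

lemma walk_prob_uminus: "walk_prob L (- x) = walk_prob L x"
proof (induction L arbitrary: x)
  case 0
  then show ?case by (simp add: walk_prob_0 delta0_def)
next
  case (Suc L)
  have "walk_prob L (- x + 1) = walk_prob L (x - 1)" "walk_prob L (- x - 1) = walk_prob L (x + 1)"
    using Suc.IH[of "x - 1"] Suc.IH[of "x + 1"] by simp_all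
  then show ?case by (simp add: walk_prob_Suc)
qed

lemma walk_prob_bound_mono: "(\<And>x. walk_prob L x \<le> M) \<Longrightarrow> walk_prob (L + j) x \<le> M"
proof (induction j arbitrary: x)
  case 0
  then show ?case by simp
next
  case (Suc j)
  then have "walk_prob (L + j) (x + 1) \<le> M" "walk_prob (L + j) (x - 1) \<le> M" by auto
  then show ?case by (simp add: walk_prob_Suc)
qed

text \<open>The one-step transition probabilities of the bridge pinned at time \<open>L + 1\<close>: from \<open>x\<close> it moves
  up with probability \<open>(L + 1 - x) / (2 (L + 1))\<close>.\<close>

lemma walk_prob_bridge_plus:
  "walk_prob L (x + 1) * real (Suc L) = walk_prob (Suc L) x * (real (Suc L) - real_of_int x)"
proof (cases rule: walk_prob_cases[of "Suc L" x])
  case 1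
  have "walk_prob L (x + 1) = 0"
  proof (cases "odd (int (Suc L) + x) \<or> x < - int (Suc L) \<or> x \<ge> int (Suc L)")
    case True
    then show ?thesis by (auto intro!: walk_prob_eq_0)
  next
    case False
    then have "even (int (Suc L) + x)" by simp
    then obtain m where m: "int (Suc L) + x = 2 * m" by (rule evenE)
    moreover have "x = 2 * int (nat m) - int (Suc L)" using m False by simp
    ultimately have "walk_prob (Suc L) x = real (Suc L choose nat m) / 2 ^ Suc L"
      using walk_prob_binomial[of "Suc L" "nat m"] by simp
    moreover have "nat m \<le> Suc L" using m False by linarith
    ultimately show ?thesis using 1 by simp
  qed
  then show ?thesis using 1 by simp
next
  case (2 k)
  show ?thesis
  proof (cases "k = Suc L")
    case True
    have "walk_prob L (x + 1) = 0" by (rule walk_prob_eq_0) (use 2 True in auto)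
    then show ?thesis using 2 True by simp
  next
    case False
    then have kL: "k \<le> L" using 2 by simp
    have "x + 1 = 2 * int k - int L" using 2 by simp
    then have a: "walk_prob L (x + 1) = real (L choose k) / 2 ^ L"
      using walk_prob_binomial[of L k] by simp
    have b: "walk_prob (Suc L) x = real (Suc L choose k) / 2 ^ Suc L"
      using walk_prob_binomial[of "Suc L" k] 2 by simp
    have c: "real (Suc L) - real_of_int x = 2 * real (Suc L - k)" using 2 kL by simp
    have "real (Suc L - k) * real (Suc L choose k) = real (Suc L) * real (L choose k)"
      using binomial_absorb_comp[of "Suc L" k] by (metis diff_Suc_1 of_nat_mult)
    then show ?thesis unfolding a b c by (simp add: field_simps)
  qed
qed

lemma walk_prob_bridge_minus:
  "walk_prob L (x - 1) * real (Suc L) = walk_prob (Suc L) x * (real (Suc L) + real_of_int x)"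
  using walk_prob_bridge_plus[of L "- x"] walk_prob_uminus[of L "x - 1"] walk_prob_uminus[of "Suc L" x]
  by simp

lemma walk_prob_central_pos: "walk_prob (2 * m) 0 > 0"
  using walk_prob_binomial[of "2 * m" m] by simp

lemma walk_prob_le_central: "walk_prob (2 * m) x \<le> walk_prob (2 * m) 0"
proof (cases rule: walk_prob_cases[of "2 * m" x])
  case 1
  then show ?thesis using walk_prob_nonneg by simp
next
  case (2 k)
  then have "walk_prob (2 * m) x = real ((2 * m) choose k) / 2 ^ (2 * m)"
    using walk_prob_binomial[of "2 * m" k] by simp
  also have "\<dots> \<le> real ((2 * m) choose m) / 2 ^ (2 * m)"
    by (intro divide_right_mono) (simp_all add: binomial_maximum')
  also have "\<dots> = walk_prob (2 * m) 0"
    using walk_prob_binomial[of "2 * m" m] by simp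
  finally show ?thesis .
qed

lemma binomial_central_tail:
  assumes "j \<le> m"
  shows "real ((2 * m) choose (m + j)) \<le> real ((2 * m) choose m) * exp (- (real j)\<^sup>2 / (2 * real m))"
  using assms
proof (induction j)
  case 0
  then show ?case by simp
next
  case (Suc j)
  have jm: "j < m" using Suc by simp
  have "real (Suc (m + j)) * real ((2 * m) choose Suc (m + j)) = real (2 * m - (m + j)) * real ((2 * m) choose (m + j))"
    using binomial_absorption[of "m + j" "2 * m"] binomial_absorb_comp[of "2 * m" "m + j"]
    by (metis of_nat_mult)
  then have ratio: "real ((2 * m) choose (m + Suc j)) = real ((2 * m) choose (m + j)) * ((real m - real j) / (real m + real j + 1))"
    using jm by (simp add: field_simps of_nat_diff)
  have "(real m - real j) / (real m + real j + 1) = 1 - (2 * real j + 1) / (real m + real j + 1)"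
    by (simp add: field_simps)
  also have "\<dots> \<le> 1 - (2 * real j + 1) / (2 * real m)"
    using jm by (intro diff_left_mono divide_left_mono) auto
  also have "\<dots> = 1 + - (2 * real j + 1) / (2 * real m)"
    by (simp only: minus_divide_left diff_conv_add_uminus)
  also have "\<dots> \<le> exp (- (2 * real j + 1) / (2 * real m))" by (rule exp_ge_add_one_self)
  finally have step: "(real m - real j) / (real m + real j + 1) \<le> exp (- (2 * real j + 1) / (2 * real m))" .
  have "real ((2 * m) choose (m + Suc j))
      \<le> real ((2 * m) choose m) * exp (- (real j)\<^sup>2 / (2 * real m)) * exp (- (2 * real j + 1) / (2 * real m))"
    unfolding ratio using Suc jm step by (intro mult_mono) auto
  also have "\<dots> = real ((2 * m) choose m) * exp (- (real (Suc j))\<^sup>2 / (2 * real m))"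
    by (simp add: mult.assoc exp_add[symmetric] add_divide_distrib[symmetric] power2_eq_square algebra_simps)
  finally show ?case .
qed

lemma walk_prob_le_gauss:
  assumes "m \<ge> 1"
  shows "walk_prob (2 * m) x \<le> walk_prob (2 * m) 0 * exp (- (real_of_int x)\<^sup>2 / (8 * real m))"
proof -
  have nonneg_case: "walk_prob (2 * m) x \<le> walk_prob (2 * m) 0 * exp (- (real_of_int x)\<^sup>2 / (8 * real m))"
    if "x \<ge> 0" for x
  proof (cases rule: walk_prob_cases[of "2 * m" x])
    case 1
    then show ?thesis using walk_prob_nonneg[of "2 * m" 0] by simp
  next
    case (2 k)
    define j where "j = k - m"
    have k: "k = m + j" "j \<le> m" using 2 that unfolding j_def by auto
    have x: "real_of_int x = 2 * real j" using 2 k by simp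
    have "walk_prob (2 * m) x = real ((2 * m) choose (m + j)) / 2 ^ (2 * m)"
      using walk_prob_binomial[of "2 * m" "m + j"] 2 k by simp
    also have "\<dots> \<le> real ((2 * m) choose m) * exp (- (real j)\<^sup>2 / (2 * real m)) / 2 ^ (2 * m)"
      by (intro divide_right_mono binomial_central_tail k) auto
    also have "\<dots> = walk_prob (2 * m) 0 * exp (- (real_of_int x)\<^sup>2 / (8 * real m))"
      using walk_prob_binomial[of "2 * m" m] unfolding x by (simp add: power2_eq_square field_simps)
    finally show ?thesis .
  qed
  show ?thesis
    using nonneg_case[of x] nonneg_case[of "- x"] walk_prob_uminus[of "2 * m" x] by (cases "x \<ge> 0") auto
qed

lemma walk_prob_central_Suc:
  "walk_prob (2 * Suc m) 0 * (2 * real m + 2) = walk_prob (2 * m) 0 * (2 * real m + 1)"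
  using walk_prob_bridge_plus[of "Suc (2 * m)" 0] walk_prob_bridge_minus[of "2 * m" 1]
  by (simp add: algebra_simps)

lemma walk_prob_central_sq_mono:
  assumes "l \<le> m"
  shows "(walk_prob (2 * l) 0)\<^sup>2 * real l \<le> (walk_prob (2 * m) 0)\<^sup>2 * real m"
  using assms
proof (induction m)
  case 0
  then show ?case by simp
next
  case (Suc m)
  define Q where "Q = walk_prob (2 * m) 0"
  define Q' where "Q' = walk_prob (2 * Suc m) 0"
  have rec: "Q' * (2 * real m + 2) = Q * (2 * real m + 1)"
    unfolding Q_def Q'_def by (rule walk_prob_central_Suc)
  have "real m * (2 * real m + 2)\<^sup>2 \<le> (2 * real m + 1)\<^sup>2 * (real m + 1)"
    by (simp add: power2_eq_square algebra_simps)
  then have "(Q\<^sup>2 * real m) * (2 * real m + 2)\<^sup>2 \<le> Q\<^sup>2 * ((2 * real m + 1)\<^sup>2 * (real m + 1))"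
    by (simp add: mult.assoc mult_left_mono)
  also have "\<dots> = (Q * (2 * real m + 1))\<^sup>2 * (real m + 1)"
    by (simp only: power_mult_distrib mult.assoc)
  also have "\<dots> = (Q' * (2 * real m + 2))\<^sup>2 * (real m + 1)"
    by (simp only: rec)
  also have "\<dots> = (Q'\<^sup>2 * real (Suc m)) * (2 * real m + 2)\<^sup>2"
    by (simp add: power_mult_distrib)
  finally have step: "Q\<^sup>2 * real m \<le> Q'\<^sup>2 * real (Suc m)"
    by (rule mult_right_le_imp_le) simp
  show ?case
    using Suc step unfolding Q_def Q'_def by (cases "l = Suc m") auto
qed

section \<open>The conditional expectation as a weighted walk sum\<close>

definition penalty :: "real \<Rightarrow> nat \<Rightarrow> int \<Rightarrow> real" where
  "penalty lam i y = exp (- lam * (real_of_int y)\<^sup>2 / (real i)\<^sup>2)"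

lemma penalty_nonneg: "penalty lam i y \<ge> 0"
  by (simp add: penalty_def)

lemma penalty_le_1: "lam \<ge> 0 \<Longrightarrow> penalty lam i y \<le> 1"
  by (simp add: penalty_def divide_nonneg_nonneg)

lemma cond_pmf_of_set:
  assumes "finite W" "W \<inter> C \<noteq> {}"
  shows "cond_pmf (pmf_of_set W) C = pmf_of_set (W \<inter> C)"
proof (rule pmf_eqI)
  fix i
  have W: "W \<noteq> {}" using assms by auto
  then have "set_pmf (pmf_of_set W) \<inter> C \<noteq> {}" using assms by simp
  moreover have "card W > 0" "card (W \<inter> C) > 0" using assms W by (simp_all add: card_gt_0_iff)
  ultimately show "pmf (cond_pmf (pmf_of_set W) C) i = pmf (pmf_of_set (W \<inter> C)) i"
    by (simp add: pmf_cond measure_pmf_of_set[OF W assms(1)] assms W indicator_def)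
qed

lemma finite_walks: "finite (walks n)"
  unfolding walks_def by (intro finite_PiE) auto

lemma S_eq_sum_greaterThanAtMost: "S \<xi> i = (\<Sum>j\<in>{0<..i}. \<xi> j)"
  unfolding S_def by (simp add: atLeastSucAtMost_greaterThanAtMost)

lemma sum_walks_witer:
  "(\<Sum>\<xi>\<in>walks n. delta0 (S \<xi> (2 * n - 2)) * (\<Prod>i\<in>{0<..2 * n - 2}. w i (S \<xi> i)))
     = 2 ^ (2 * n - 2) * witer w delta0 0 (2 * n - 2) 0"
  using witer_path_sum[where G = delta0 and w = w and s = 0 and k = "2 * n - 2" and x = 0]
  unfolding walks_def S_eq_sum_greaterThanAtMost by (simp add: atLeastSucAtMost_greaterThanAtMost)

lemma witer_restart:
  assumes t: "0 < t" "t \<le> N" and before: "\<And>i y. i < t \<Longrightarrow> w i y = 1"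
    and at: "\<And>y. w t y = delta0 y"
  shows "witer w delta0 0 N 0 = walk_prob t 0 * witer w delta0 t (N - t) 0"
proof -
  define H where "H = witer w delta0 t (N - t)"
  obtain k where k: "t = Suc k" using t by (cases t) auto
  have "witer w delta0 0 N 0 = witer w H 0 t 0"
    unfolding H_def using witer_add[of w delta0 0 t "N - t"] t by simp
  also have "\<dots> = witer unit_weight (\<lambda>z. w (0 + t) z * H z) 0 t 0"
    unfolding k by (rule witer_last_weight) (use before k in auto)
  also have "(\<lambda>z. w (0 + t) z * H z) = (\<lambda>z. H 0 * delta0 z)"
    using at by (auto simp: delta0_def fun_eq_iff)
  also have "witer unit_weight (\<lambda>z. H 0 * delta0 z) 0 t 0 = H 0 * walk_prob t 0"
    by (simp add: witer_scale walk_prob_def)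
  finally show ?thesis unfolding H_def by simp
qed

lemma sum_walks_COND:
  fixes v :: "nat \<Rightarrow> int \<Rightarrow> real" and n :: nat
  defines "t \<equiv> 2 * Apar n - 2" and "N \<equiv> 2 * n - 2"
  assumes A: "2 \<le> Apar n" "Apar n \<le> n"
  shows "(\<Sum>\<xi>\<in>walks n \<inter> COND n. \<Prod>i\<in>{t<..N}. v i (S \<xi> i))
           = 2 ^ N * walk_prob t 0 * witer v delta0 t (N - t) 0"
proof -
  define w where "w i y = (if i < t then 1 else if i = t then delta0 y else v i y)" for i y
  have t: "0 < t" "t \<le> N" using A unfolding t_def N_def by auto
  have split: "{0<..N} = {0<..<t} \<union> ({t} \<union> {t<..N})" using t by auto
  have prod_w: "(\<Prod>i\<in>{0<..N}. w i (S \<xi> i)) = delta0 (S \<xi> t) * (\<Prod>i\<in>{t<..N}. v i (S \<xi> i))" for \<xi>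
  proof -
    have "(\<Prod>i\<in>{0<..N}. w i (S \<xi> i))
        = (\<Prod>i\<in>{0<..<t}. w i (S \<xi> i)) * (w t (S \<xi> t) * (\<Prod>i\<in>{t<..N}. w i (S \<xi> i)))"
      unfolding split by (subst prod.union_disjoint, auto)+
    then show ?thesis by (simp add: w_def)
  qed
  have "(\<Sum>\<xi>\<in>walks n \<inter> COND n. \<Prod>i\<in>{t<..N}. v i (S \<xi> i))
      = (\<Sum>\<xi>\<in>walks n. delta0 (S \<xi> N) * (\<Prod>i\<in>{0<..N}. w i (S \<xi> i)))"
    unfolding prod_w using finite_walks
    by (subst sum.inter_restrict) (auto intro!: sum.cong simp: COND_def t_def N_def delta0_def)
  also have "\<dots> = 2 ^ N * witer w delta0 0 N 0"
    unfolding N_def by (rule sum_walks_witer)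
  also have "witer w delta0 0 N 0 = walk_prob t 0 * witer w delta0 t (N - t) 0"
    by (rule witer_restart[OF t]) (auto simp: w_def)
  also have "witer w delta0 t (N - t) 0 = witer v delta0 t (N - t) 0"
    by (rule witer_cong_weight) (auto simp: w_def)
  finally show ?thesis by simp
qed

lemma condE_eq_witer:
  assumes A: "2 \<le> Apar n" "Apar n \<le> n"
  shows "condE lam n = witer (penalty lam) delta0 (2 * Apar n - 2) (2 * (n - Apar n)) 0
                        / walk_prob (2 * (n - Apar n)) 0"
proof -
  define t where "t = 2 * Apar n - 2"
  define N where "N = 2 * n - 2"
  define W where "W = walks n \<inter> COND n"
  have Nt: "N - t = 2 * (n - Apar n)" unfolding N_def t_def using A by simp
  have "t = 2 * (Apar n - 1)" unfolding t_def by simp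
  then have pos: "walk_prob t 0 > 0" "walk_prob (N - t) 0 > 0"
    unfolding Nt by (simp_all only: walk_prob_central_pos)
  have idx: "{2 * Apar n - 1..2 * n - 2} = {t<..N}" unfolding t_def N_def using A by auto
  have "exp (- lam * Lmain n \<xi>) = (\<Prod>i\<in>{t<..N}. penalty lam i (S \<xi> i))" for \<xi>
    unfolding Lmain_def idx penalty_def
    by (simp add: exp_sum[symmetric] sum_negf[symmetric] sum_distrib_left)
  then have num: "(\<Sum>\<xi>\<in>W. exp (- lam * Lmain n \<xi>)) = 2 ^ N * walk_prob t 0 * witer (penalty lam) delta0 t (N - t) 0"
    using sum_walks_COND[OF A, of "penalty lam"] unfolding W_def t_def N_def by simp
  have den: "real (card W) = 2 ^ N * walk_prob t 0 * walk_prob (N - t) 0"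
    using sum_walks_COND[OF A, of unit_weight] unfolding W_def t_def N_def
    by (simp add: witer_unit_weight_delta0)
  have W: "finite W" "W \<noteq> {}"
    using finite_walks den pos unfolding W_def by auto
  have "condE lam n = (\<Sum>\<xi>\<in>W. exp (- lam * Lmain n \<xi>)) / real (card W)"
    unfolding condE_def walk_pmf_def W_def cond_pmf_of_set[OF finite_walks W(2)[unfolded W_def]]
    using W unfolding W_def by (simp add: integral_pmf_of_set)
  also have "\<dots> = witer (penalty lam) delta0 t (N - t) 0 / walk_prob (N - t) 0"
    unfolding num den using pos by simp
  finally show ?thesis unfolding t_def Nt[unfolded t_def] .
qed

lemma cosh_le_exp_half_sq: "cosh (y::real) \<le> exp (y\<^sup>2 / 2)"
proof -
  have nonneg_case: "cosh a \<le> exp (a\<^sup>2 / 2)" if "a \<ge> 0" for a :: real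
  proof -
    have "1 + (1/2) * (exp (2 * a) - 1) = exp a * cosh a"
      by (simp add: cosh_field_def algebra_simps mult_exp_exp flip: exp_add)
    then have "- a + ln (exp a * cosh a) \<le> a\<^sup>2 / 2"
      using Hoeffdings_lemma_aux[of "2 * a" "1/2"] that by (simp add: power2_eq_square)
    then have "ln (cosh a) \<le> a\<^sup>2 / 2" by (simp add: ln_mult)
    then show ?thesis by (metis cosh_real_pos exp_le_cancel_iff exp_ln)
  qed
  show ?thesis
    using nonneg_case[of y] nonneg_case[of "- y"] by (cases "y \<ge> 0") auto
qed

lemma sinh_ge_self: "0 \<le> a \<Longrightarrow> a \<le> sinh (a::real)"
  using DERIV_nonneg_imp_nondecreasing[of 0 a "\<lambda>t. sinh t - t"]
  by (force intro!: derivative_eq_intros simp: cosh_real_ge_1)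

lemma cosh_ge_one_plus_half_sq: "1 + y\<^sup>2 / 2 \<le> cosh (y::real)"
proof -
  have nonneg_case: "1 + a\<^sup>2 / 2 \<le> cosh a" if "a \<ge> 0" for a :: real
    using DERIV_nonneg_imp_nondecreasing[of 0 a "\<lambda>t. cosh t - t\<^sup>2 / 2"] that
    by (force intro!: derivative_eq_intros simp: sinh_ge_self)
  show ?thesis
    using nonneg_case[of y] nonneg_case[of "- y"] by (cases "y \<ge> 0") auto
qed

lemma exp_le_cosh:
  assumes "y\<^sup>2 \<le> 2"
  shows "exp (y\<^sup>2 / 2 - y ^ 4 / 4) \<le> cosh (y::real)"
proof -
  have u: "0 \<le> y\<^sup>2 / 2" "y\<^sup>2 / 2 \<le> 1" using assms by auto
  have "y\<^sup>2 / 2 - (y\<^sup>2 / 2)\<^sup>2 \<le> ln (1 + y\<^sup>2 / 2)" by (rule ln_one_plus_pos_lower_bound[OF u])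
  moreover have "(y\<^sup>2 / 2)\<^sup>2 = y ^ 4 / 4" by (simp add: power2_eq_square power4_eq_xxxx)
  ultimately have "exp (y\<^sup>2 / 2 - y ^ 4 / 4) \<le> 1 + y\<^sup>2 / 2"
    by (metis add_pos_nonneg exp_le_cancel_iff exp_ln u(1) zero_less_one)
  also have "\<dots> \<le> cosh y" by (rule cosh_ge_one_plus_half_sq)
  finally show ?thesis .
qed

lemma sq_div_4_le_exp: "0 \<le> w \<Longrightarrow> w\<^sup>2 / 4 \<le> exp (w::real)"
proof -
  assume w: "w \<ge> 0"
  have "w / 2 \<le> exp (w / 2)" using exp_ge_add_one_self[of "w / 2"] by linarith
  then have "(w / 2)\<^sup>2 \<le> (exp (w / 2))\<^sup>2" using w by (intro power_mono) auto
  also have "\<dots> = exp w" by (simp add: power2_eq_square mult_exp_exp)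
  finally show ?thesis by (simp add: power_divide)
qed

lemma inverse_sqrt_diff_ge:
  assumes s: "s \<ge> (1::real)"
  shows "1 / (6 * (s * sqrt s)) \<le> 1 / sqrt s - 1 / sqrt (s + 1)"
proof -
  define a where "a = sqrt s"
  define a' where "a' = sqrt (s + 1)"
  have a1: "a \<ge> 1" unfolding a_def using s by simp
  have aa: "a * a = s" "a' * a' = s + 1" unfolding a_def a'_def using s by auto
  have a'pos: "a' > 0" unfolding a'_def using s by simp
  have "sqrt (s + 1) \<le> sqrt (4 * s)" using s by (intro real_sqrt_le_mono) simp
  then have a'le: "a' \<le> 2 * a" unfolding a_def a'_def by (simp add: real_sqrt_mult)
  have "(1 / a - 1 / a') * (a * a' * (a + a')) = a' * a' - a * a"
    using a1 a'pos by (simp add: algebra_simps)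
  then have diff: "1 / a - 1 / a' = 1 / (a * a' * (a + a'))"
    using aa a1 a'pos by (simp add: eq_divide_eq)
  have "a * a' * (a + a') \<le> (a * (2 * a)) * (3 * a)"
    using a1 a'pos a'le by (intro mult_mono) auto
  then have "a * a' * (a + a') \<le> 6 * (a * a * a)" by (simp add: algebra_simps)
  then have "1 / (6 * (a * a * a)) \<le> 1 / a - 1 / a'"
    unfolding diff using a1 a'pos by (intro divide_left_mono mult_pos_pos) auto
  moreover have "a * a * a = s * sqrt s" using aa(1) unfolding a_def by simp
  ultimately show ?thesis unfolding a_def a'_def using s by simp
qed

section \<open>Gaussian profiles\<close>

text \<open>The profiles \<open>s\<^sup>c exp (- c x\<^sup>2 / s)\<close> are approximate eigenfunctions of the penalised step
  backwards in time: for \<open>c < b\<close> they are supersolutions and for \<open>c = b\<close> (with \<open>\<lambda> = b + 2 b\<^sup>2\<close>)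
  they are subsolutions up to an error of order \<open>s^(-3/2)\<close>.  The thresholds below are the times after
  which the second-order Taylor defect of the step has the right sign.\<close>

definition profile :: "real \<Rightarrow> nat \<Rightarrow> int \<Rightarrow> real" where
  "profile c s x = real s powr c * exp (- c * (real_of_int x)\<^sup>2 / real s)"

definition super_threshold :: "real \<Rightarrow> real \<Rightarrow> real" where
  "super_threshold c lam = (lam + 4 * lam * c + 2 * lam\<^sup>2) / (lam - c - 2 * c\<^sup>2)"

definition sub_threshold :: "real \<Rightarrow> real \<Rightarrow> real" where
  "sub_threshold b lam = (4 * lam * b + 2 * lam\<^sup>2) / (b + 4 * b\<^sup>2 + 8 * b ^ 3)"

lemma profile_nonneg: "profile c s x \<ge> 0"
  by (simp add: profile_def)

lemma profile_at_0: "s \<ge> 1 \<Longrightarrow> profile c s 0 = real s powr c"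
  by (simp add: profile_def)

lemma profile_eq_exp: "s \<ge> 1 \<Longrightarrow> profile c s x = exp (c * ln (real s) - c * (real_of_int x)\<^sup>2 / real s)"
  by (simp add: profile_def powr_def exp_diff exp_add[symmetric] algebra_simps)

lemma penalty_profile_eq:
  "penalty lam (Suc s) y * profile c (Suc s) y
     = exp (c * ln (real s + 1) - ((lam + c * (real s + 1)) / (real s + 1)\<^sup>2) * (real_of_int y)\<^sup>2)"
proof -
  have "- lam * Y / v\<^sup>2 + (c * l - c * Y / v) = c * l - ((lam + c * v) / v\<^sup>2) * Y"
    if "v > 0" for v Y l :: real
    using that by (simp add: field_simps power2_eq_square)
  from this[of "real s + 1"] show ?thesis
    unfolding penalty_def profile_def powr_def by (simp add: mult_exp_exp add.commute)
qed

lemma exp_sq_shift: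
  fixes B X :: real
  shows "exp (K - B * (X + 1)\<^sup>2) = exp (K - B * (X\<^sup>2 + 1)) * exp (- (2 * B * X))"
    and "exp (K - B * (X - 1)\<^sup>2) = exp (K - B * (X\<^sup>2 + 1)) * exp (2 * B * X)"
  by (simp_all add: exp_add[symmetric] power2_eq_square algebra_simps)

lemma profile_defect_eq:
  fixes c lam s u :: real
  assumes "u = s + 1" "s > 0"
  shows "c / s - (lam + c * u) / u\<^sup>2 + 2 * ((lam + c * u) / u\<^sup>2)\<^sup>2
       = ((c - lam + 2 * c\<^sup>2) * u ^ 3 + (lam + 4 * lam * c - 2 * c\<^sup>2) * u\<^sup>2
          + (2 * lam\<^sup>2 - 4 * lam * c) * u - 2 * lam\<^sup>2) / (s * u ^ 4)"
proof -
  have "u > 0" using assms by simp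
  then have "c / s - (lam + c * u) / u\<^sup>2 + 2 * ((lam + c * u) / u\<^sup>2)\<^sup>2
      = (c * u ^ 4 - s * u\<^sup>2 * (lam + c * u) + 2 * s * (lam + c * u)\<^sup>2) / (s * u ^ 4)"
    using assms(2) by (simp add: field_simps power2_eq_square power4_eq_xxxx)
  also have "c * u ^ 4 - s * u\<^sup>2 * (lam + c * u) + 2 * s * (lam + c * u)\<^sup>2
      = (c - lam + 2 * c\<^sup>2) * u ^ 3 + (lam + 4 * lam * c - 2 * c\<^sup>2) * u\<^sup>2
          + (2 * lam\<^sup>2 - 4 * lam * c) * u - 2 * lam\<^sup>2"
    using assms(1) by (simp add: power2_eq_square power3_eq_cube power4_eq_xxxx algebra_simps)
  finally show ?thesis .
qed

lemma profile_defect_nonpos: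
  fixes c lam s u :: real
  assumes u: "u = s + 1" "s > 0" and c: "c \<ge> 0" "lam \<ge> 0" "lam - c - 2 * c\<^sup>2 > 0"
    and thr: "u \<ge> super_threshold c lam"
  shows "c / s - (lam + c * u) / u\<^sup>2 + 2 * ((lam + c * u) / u\<^sup>2)\<^sup>2 \<le> 0"
proof -
  define k where "k = lam - c - 2 * c\<^sup>2"
  define K where "K = lam + 4 * lam * c + 2 * lam\<^sup>2"
  have u1: "u \<ge> 1" using u by simp
  have "u\<^sup>2 * (K - k * u) - ((c - lam + 2 * c\<^sup>2) * u ^ 3 + (lam + 4 * lam * c - 2 * c\<^sup>2) * u\<^sup>2
        + (2 * lam\<^sup>2 - 4 * lam * c) * u - 2 * lam\<^sup>2)
      = 2 * lam\<^sup>2 * (u\<^sup>2 - u) + 2 * c\<^sup>2 * u\<^sup>2 + 4 * lam * c * u + 2 * lam\<^sup>2"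
    unfolding K_def k_def by (simp add: power2_eq_square power3_eq_cube algebra_simps)
  moreover have "0 \<le> 2 * lam\<^sup>2 * (u\<^sup>2 - u) + 2 * c\<^sup>2 * u\<^sup>2 + 4 * lam * c * u + 2 * lam\<^sup>2"
    using u1 c by (intro add_nonneg_nonneg mult_nonneg_nonneg) (auto simp: power2_eq_square)
  moreover have "k * u \<ge> K"
    using thr c(3) unfolding k_def K_def super_threshold_def by (simp add: divide_le_eq mult.commute)
  then have "u\<^sup>2 * (K - k * u) \<le> 0" by (intro mult_nonneg_nonpos) auto
  ultimately have "(c - lam + 2 * c\<^sup>2) * u ^ 3 + (lam + 4 * lam * c - 2 * c\<^sup>2) * u\<^sup>2
      + (2 * lam\<^sup>2 - 4 * lam * c) * u - 2 * lam\<^sup>2 \<le> 0"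
    by linarith
  then show ?thesis
    unfolding profile_defect_eq[OF u] using u by (simp add: divide_nonpos_pos)
qed

lemma profile_defect_nonneg:
  fixes b lam s u :: real
  assumes u: "u = s + 1" "s > 0" and b: "b > 0" and lam: "lam = b + 2 * b\<^sup>2"
    and thr: "u \<ge> sub_threshold b lam"
  shows "b / s - (lam + b * u) / u\<^sup>2 + 2 * ((lam + b * u) / u\<^sup>2)\<^sup>2 \<ge> 0"
proof -
  define k where "k = b + 4 * b\<^sup>2 + 8 * b ^ 3"
  have u1: "u \<ge> 1" using u by simp
  have "k > 0" unfolding k_def using b by (intro add_pos_nonneg) auto
  then have "k * u \<ge> 4 * lam * b + 2 * lam\<^sup>2"
    using thr unfolding k_def sub_threshold_def by (simp add: divide_le_eq mult.commute)
  then have "k * u * u \<ge> (4 * lam * b + 2 * lam\<^sup>2) * u" using u1 by (intro mult_right_mono) auto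
  moreover have "lam\<^sup>2 * 1 \<le> lam\<^sup>2 * u" using u1 by (intro mult_left_mono) auto
  moreover have "2 * lam\<^sup>2 * u \<ge> 0" using u1 by simp
  ultimately have "k * u\<^sup>2 + (2 * lam\<^sup>2 - 4 * lam * b) * u - 2 * lam\<^sup>2 \<ge> 0"
    by (simp add: power2_eq_square algebra_simps)
  moreover have "(b - lam + 2 * b\<^sup>2) * u ^ 3 + (lam + 4 * lam * b - 2 * b\<^sup>2) * u\<^sup>2
      + (2 * lam\<^sup>2 - 4 * lam * b) * u - 2 * lam\<^sup>2 = k * u\<^sup>2 + (2 * lam\<^sup>2 - 4 * lam * b) * u - 2 * lam\<^sup>2"
    unfolding k_def lam by (simp add: power2_eq_square power3_eq_cube algebra_simps)
  ultimately show ?thesis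
    unfolding profile_defect_eq[OF u] using u by simp
qed

lemma profile_supersolution:
  fixes c lam :: real and s :: nat
  assumes c: "c \<ge> 0" "lam \<ge> 0" "lam - c - 2 * c\<^sup>2 > 0" and s: "s \<ge> 1"
    and thr: "real s + 1 \<ge> super_threshold c lam"
  shows "wstep (penalty lam) s (profile c (Suc s)) x \<le> profile c s x"
proof -
  define u where "u = real s + 1"
  define B where "B = (lam + c * u) / u\<^sup>2"
  define X where "X = real_of_int x"
  define K where "K = c * ln u"
  have s0: "real s > 0" using s by simp
  have "B \<ge> 0" unfolding B_def u_def using c by simp
  have defect: "c / real s - B + 2 * B\<^sup>2 \<le> 0"
    unfolding B_def by (rule profile_defect_nonpos[OF _ s0 c]) (use thr u_def in simp_all)
  then have "c / real s - B \<le> 0" using zero_le_power2[of B] by linarith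
  then have "(c / real s - B) + X\<^sup>2 * (c / real s - B + 2 * B\<^sup>2) \<le> 0"
    using defect by (simp add: mult_nonneg_nonpos add_nonpos_nonpos)
  then have quad: "c / real s - B * (X\<^sup>2 + 1) + 2 * B\<^sup>2 * X\<^sup>2 \<le> - c * X\<^sup>2 / real s"
    by (simp add: algebra_simps)
  have "1 + 1 / real s = u / real s" unfolding u_def using s0 by (simp add: field_simps)
  then have "ln u = ln (real s) + ln (1 + 1 / real s)"
    using s0 unfolding u_def by (simp add: ln_div)
  also have "ln (1 + 1 / real s) \<le> 1 / real s" by (rule ln_add_one_self_le_self) simp
  finally have "K \<le> c * ln (real s) + c / real s"
    unfolding K_def using mult_left_mono[OF _ c(1)] by (fastforce simp: algebra_simps)
  have "wstep (penalty lam) s (profile c (Suc s)) x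
      = (exp (K - B * (X + 1)\<^sup>2) + exp (K - B * (X - 1)\<^sup>2)) / 2"
    unfolding wstep_def penalty_profile_eq K_def B_def X_def u_def by simp
  also have "\<dots> = exp (K - B * (X\<^sup>2 + 1)) * cosh (2 * B * X)"
    unfolding exp_sq_shift cosh_field_def by (simp add: algebra_simps)
  also have "\<dots> \<le> exp (K - B * (X\<^sup>2 + 1)) * exp ((2 * B * X)\<^sup>2 / 2)"
    by (intro mult_left_mono cosh_le_exp_half_sq) simp
  also have "\<dots> = exp (K - B * (X\<^sup>2 + 1) + 2 * B\<^sup>2 * X\<^sup>2)"
    by (simp add: exp_add[symmetric] power_mult_distrib)
  also have "\<dots> \<le> exp (c * ln (real s) - c * X\<^sup>2 / real s)"
    using \<open>K \<le> _\<close> quad by simp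
  also have "\<dots> = profile c s x" using s unfolding X_def by (simp add: profile_eq_exp)
  finally show ?thesis .
qed

section \<open>The walk pinned at the final time\<close>

text \<open>Factoring out \<open>walk_prob\<close> (Doob's transform): the remaining factor is an average over the
  transitions of the bridge, which moves towards the pinning point.\<close>

lemma wstep_walk_prob_mult:
  "wstep w s (\<lambda>y. walk_prob L y * g y) x = walk_prob (Suc L) x *
     (((real (Suc L) - real_of_int x) * (w (Suc s) (x + 1) * g (x + 1))
       + (real (Suc L) + real_of_int x) * (w (Suc s) (x - 1) * g (x - 1))) / (2 * real (Suc L)))"
proof -
  have p: "walk_prob L (x + 1) = walk_prob (Suc L) x * (real (Suc L) - real_of_int x) / real (Suc L)"
    using walk_prob_bridge_plus[of L x] by (simp add: field_simps del: of_nat_Suc)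
  have m: "walk_prob L (x - 1) = walk_prob (Suc L) x * (real (Suc L) + real_of_int x) / real (Suc L)"
    using walk_prob_bridge_minus[of L x] by (simp add: field_simps del: of_nat_Suc)
  show ?thesis unfolding wstep_def p m by (simp add: field_simps del: of_nat_Suc)
qed

lemma walk_prob_supersolution: "lam \<ge> 0 \<Longrightarrow> wstep (penalty lam) s (walk_prob L) x \<le> walk_prob (Suc L) x"
  unfolding wstep_def walk_prob_Suc
  by (intro divide_right_mono add_mono mult_left_le_one_le penalty_le_1 penalty_nonneg walk_prob_nonneg) auto

lemma bridge_average_ge_cosh:
  fixes A Lr X y :: real
  assumes "A \<ge> 0" "Lr > 0" "0 \<le> X * y"
  shows "A * cosh y \<le> ((Lr - X) * (A * exp (- y)) + (Lr + X) * (A * exp y)) / (2 * Lr)"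
proof -
  have "0 \<le> X * sinh y"
    using assms(3) by (cases "y \<ge> 0") (auto simp: zero_le_mult_iff sinh_real_nonneg_iff sinh_real_nonpos_iff)
  then have "0 \<le> A * (X * sinh y) / Lr" using assms(1,2) by simp
  moreover have "((Lr - X) * (A * exp (- y)) + (Lr + X) * (A * exp y)) / (2 * Lr)
      = A * cosh y + A * (X * sinh y) / Lr"
    using assms(2) by (simp add: cosh_field_def sinh_field_def field_simps)
  ultimately show ?thesis by simp
qed

definition bridge_err :: "real \<Rightarrow> real \<Rightarrow> nat \<Rightarrow> int \<Rightarrow> real" where
  "bridge_err lam b s x = lam / (real s)\<^sup>2 + 4 * (lam + b) ^ 4 * (real_of_int x) ^ 4 / (real s) ^ 4"

lemma bridge_err_ge:
  assumes "0 \<le> B" "B \<le> (lam + b) / real s" "0 \<le> lam + b"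
  shows "(2 * B * real_of_int x) ^ 4 / 4 \<le> bridge_err lam b s x - lam / (real s)\<^sup>2"
proof -
  have "(2 * B * real_of_int x) ^ 4 / 4 = 4 * B ^ 4 * (real_of_int x) ^ 4"
    by (simp add: power_mult_distrib)
  also have "\<dots> \<le> 4 * ((lam + b) / real s) ^ 4 * (real_of_int x) ^ 4"
    using assms by (intro mult_right_mono mult_left_mono power_mono) auto
  finally show ?thesis unfolding bridge_err_def by (simp add: power_divide)
qed

lemma bridge_coeff_bounds:
  fixes b lam :: real and s :: nat
  defines "B \<equiv> (lam + b * (real s + 1)) / (real s + 1)\<^sup>2"
  assumes b: "b > 0" "lam = b + 2 * b\<^sup>2" and s: "s \<ge> 1" and thr: "real s + 1 \<ge> sub_threshold b lam"
  shows "0 \<le> B" and "B \<le> (lam + b) / real s" and "0 \<le> b / real s - B + 2 * B\<^sup>2"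
    and "b / (real s + 1) - B = - lam / (real s + 1)\<^sup>2"
proof -
  define u where "u = real s + 1"
  have B_def: "B = (lam + b * u) / u\<^sup>2" unfolding B_def u_def ..
  have s0: "real s > 0" using s by simp
  have lam0: "lam \<ge> 0" using b by simp
  show "0 \<le> B" unfolding B_def u_def using b lam0 by simp
  have "lam + b * u \<le> (lam + b) * u" using lam0 s0 unfolding u_def by (simp add: algebra_simps)
  then have "B \<le> (lam + b) * u / u\<^sup>2" unfolding B_def by (intro divide_right_mono) auto
  also have "\<dots> = (lam + b) / u" using s0 unfolding u_def by (simp add: power2_eq_square)
  also have "\<dots> \<le> (lam + b) / real s" using s0 lam0 b unfolding u_def by (intro divide_left_mono) auto
  finally show "B \<le> (lam + b) / real s" .
  show "0 \<le> b / real s - B + 2 * B\<^sup>2"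
    unfolding B_def by (rule profile_defect_nonneg[OF _ s0 b]) (use thr u_def in simp_all)
  have "u > 0" unfolding u_def by simp
  then show "b / (real s + 1) - B = - lam / (real s + 1)\<^sup>2"
    unfolding B_def u_def[symmetric] by (simp add: field_simps power2_eq_square)
qed

lemma profile_err_le_cosh:
  fixes b lam :: real and s :: nat and x :: int
  defines "B \<equiv> (lam + b * (real s + 1)) / (real s + 1)\<^sup>2" and "X \<equiv> real_of_int x"
  assumes b: "b > 0" "lam = b + 2 * b\<^sup>2" and s: "s \<ge> 1" and thr: "real s + 1 \<ge> sub_threshold b lam"
  shows "profile b s x * (1 - bridge_err lam b s x) \<le> exp (b * ln (real s + 1) - B * (X\<^sup>2 + 1)) * cosh (2 * B * X)"
proof -
  define u where "u = real s + 1"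
  define y where "y = 2 * B * X"
  define A where "A = exp (b * ln u - B * (X\<^sup>2 + 1))"
  note B = bridge_coeff_bounds[OF b s thr, folded B_def u_def]
  have s0: "real s > 0" using s by simp
  have lam0: "lam \<ge> 0" using b by simp
  have err: "y ^ 4 / 4 \<le> bridge_err lam b s x - lam / (real s)\<^sup>2"
    unfolding y_def X_def by (rule bridge_err_ge[OF B(1,2)]) (use lam0 b in simp)
  show ?thesis
  proof (cases "y\<^sup>2 \<le> 2")
    case False
    then have "2 ^ 2 < (y\<^sup>2)\<^sup>2" by (intro power_strict_mono) auto
    then have "1 < y ^ 4 / 4" by (simp add: power_mult[symmetric])
    moreover have "0 \<le> lam / (real s)\<^sup>2" using lam0 by simp
    ultimately have "1 - bridge_err lam b s x \<le> 0" using err by linarith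
    then have "profile b s x * (1 - bridge_err lam b s x) \<le> 0"
      by (rule mult_nonneg_nonpos[OF profile_nonneg])
    moreover have "0 \<le> exp (b * ln (real s + 1) - B * (X\<^sup>2 + 1)) * cosh (2 * B * X)" by simp
    ultimately show ?thesis by linarith
  next
    case True
    have "ln (real s / u) \<le> real s / u - 1" using s0 unfolding u_def by (intro ln_le_minus_one) simp
    then have "ln (real s) + 1 / u \<le> ln u" using s0 unfolding u_def by (simp add: ln_div field_simps)
    from mult_left_mono[OF this, of b] have K: "b * ln (real s) + b / u \<le> b * ln u"
      using b by (simp add: algebra_simps)
    have lu: "lam / u\<^sup>2 \<le> lam / (real s)\<^sup>2"
      using s0 lam0 unfolding u_def by (intro divide_left_mono power_mono) auto
    have "0 \<le> X\<^sup>2 * (b / real s - B + 2 * B\<^sup>2)" using B(3) by simp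
    then have D: "0 \<le> b * X\<^sup>2 / real s - B * X\<^sup>2 + 2 * B\<^sup>2 * X\<^sup>2" by (simp add: algebra_simps)
    have y2: "y\<^sup>2 / 2 = 2 * B\<^sup>2 * X\<^sup>2" unfolding y_def by (simp add: power_mult_distrib)
    have "b * ln (real s) - b * X\<^sup>2 / real s - bridge_err lam b s x
        \<le> b * ln u - (B * X\<^sup>2 + B) + 2 * B\<^sup>2 * X\<^sup>2 - y ^ 4 / 4"
      using K B(4) lu D err by linarith
    then have "profile b s x * exp (- bridge_err lam b s x) \<le> A * exp (y\<^sup>2 / 2 - y ^ 4 / 4)"
      using s unfolding A_def X_def y2 by (simp add: profile_eq_exp mult_exp_exp algebra_simps)
    also have "\<dots> \<le> A * cosh y"
      using exp_le_cosh[OF True] by (simp add: A_def)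
    finally have "profile b s x * exp (- bridge_err lam b s x) \<le> A * cosh y" .
    moreover have "profile b s x * (1 - bridge_err lam b s x) \<le> profile b s x * exp (- bridge_err lam b s x)"
      using exp_ge_add_one_self[of "- bridge_err lam b s x"] by (intro mult_left_mono profile_nonneg) simp
    ultimately show ?thesis unfolding A_def y_def u_def by linarith
  qed
qed

lemma profile_bridge_subsolution:
  fixes b lam Lr :: real and s :: nat
  assumes b: "b > 0" "lam = b + 2 * b\<^sup>2" and s: "s \<ge> 1"
    and thr: "real s + 1 \<ge> sub_threshold b lam" and Lr: "Lr > 0"
  shows "profile b s x * (1 - bridge_err lam b s x)
    \<le> ((Lr - real_of_int x) * (penalty lam (Suc s) (x + 1) * profile b (Suc s) (x + 1))
        + (Lr + real_of_int x) * (penalty lam (Suc s) (x - 1) * profile b (Suc s) (x - 1))) / (2 * Lr)"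
proof -
  define u where "u = real s + 1"
  define B where "B = (lam + b * u) / u\<^sup>2"
  define X where "X = real_of_int x"
  define A where "A = exp (b * ln u - B * (X\<^sup>2 + 1))"
  have "0 \<le> B" unfolding B_def u_def using bridge_coeff_bounds(1)[OF b s thr] .
  have "penalty lam (Suc s) (x + 1) * profile b (Suc s) (x + 1) = exp (b * ln u - B * (X + 1)\<^sup>2)"
    "penalty lam (Suc s) (x - 1) * profile b (Suc s) (x - 1) = exp (b * ln u - B * (X - 1)\<^sup>2)"
    unfolding penalty_profile_eq B_def X_def u_def by simp_all
  then have steps: "penalty lam (Suc s) (x + 1) * profile b (Suc s) (x + 1) = A * exp (- (2 * B * X))"
    "penalty lam (Suc s) (x - 1) * profile b (Suc s) (x - 1) = A * exp (2 * B * X)"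
    unfolding exp_sq_shift A_def by simp_all
  have "profile b s x * (1 - bridge_err lam b s x) \<le> A * cosh (2 * B * X)"
    unfolding A_def u_def B_def X_def using profile_err_le_cosh[OF b s thr] .
  also have "\<dots> \<le> ((Lr - X) * (A * exp (- (2 * B * X))) + (Lr + X) * (A * exp (2 * B * X))) / (2 * Lr)"
  proof (rule bridge_average_ge_cosh)
    have "X * (2 * B * X) = 2 * B * X\<^sup>2" by (simp add: power2_eq_square)
    then show "0 \<le> X * (2 * B * X)" using \<open>0 \<le> B\<close> by simp
  qed (use Lr in \<open>simp_all add: A_def\<close>)
  finally show ?thesis unfolding steps X_def .
qed

lemma profile_bridge_err_le:
  fixes b lam d :: real and s :: nat
  assumes b: "b > 0" "lam \<ge> 0" and d: "0 < d" "d \<le> 1/2" and s: "s \<ge> 1"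
  shows "profile b s x * bridge_err lam b s x
    \<le> (lam + 16 * (lam + b) ^ 4 / d\<^sup>2) * (1 / (real s * sqrt (real s))) * profile (b - d) s x"
proof -
  define r where "r = real s"
  define z where "z = (real_of_int x)\<^sup>2 / r"
  have r1: "r \<ge> 1" unfolding r_def using s by simp
  have z0: "z \<ge> 0" unfolding z_def using r1 by simp
  have split: "profile b s x = r powr d * exp (- d * z) * profile (b - d) s x"
  proof -
    have p: "r powr b = r powr d * r powr (b - d)" by (simp add: powr_add[symmetric])
    have e: "- b * (real_of_int x)\<^sup>2 / r = - d * z + (- (b - d) * (real_of_int x)\<^sup>2 / r)"
      unfolding z_def by (simp add: diff_divide_distrib add_divide_distrib algebra_simps)
    show ?thesis unfolding profile_def r_def[symmetric] p e exp_add by (simp add: algebra_simps)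
  qed
  have err: "bridge_err lam b s x = (lam + 4 * (lam + b) ^ 4 * z\<^sup>2) / r\<^sup>2"
    unfolding bridge_err_def r_def[symmetric] z_def using r1
    by (simp add: power_divide field_simps power2_eq_square power4_eq_xxxx)
  have "(d * z)\<^sup>2 / 4 \<le> exp (d * z)" using sq_div_4_le_exp[of "d * z"] d z0 by simp
  then have "z\<^sup>2 \<le> 4 / d\<^sup>2 * exp (d * z)" using d by (simp add: power_mult_distrib field_simps)
  then have "z\<^sup>2 * exp (- d * z) \<le> 4 / d\<^sup>2 * exp (d * z) * exp (- d * z)"
    by (intro mult_right_mono) auto
  then have zb: "z\<^sup>2 * exp (- d * z) \<le> 4 / d\<^sup>2" by (simp add: mult.assoc mult_exp_exp)
  have "exp (- d * z) * (lam + 4 * (lam + b) ^ 4 * z\<^sup>2)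
      = lam * exp (- d * z) + 4 * (lam + b) ^ 4 * (z\<^sup>2 * exp (- d * z))"
    by (simp add: algebra_simps)
  also have "\<dots> \<le> lam * 1 + 4 * (lam + b) ^ 4 * (4 / d\<^sup>2)"
    using zb b d z0 by (intro add_mono mult_left_mono) auto
  finally have core: "exp (- d * z) * (lam + 4 * (lam + b) ^ 4 * z\<^sup>2) \<le> lam + 16 * (lam + b) ^ 4 / d\<^sup>2"
    by simp
  have "r powr d \<le> r powr (1/2)" using r1 d by (intro powr_mono) auto
  then have "r powr d / r\<^sup>2 \<le> sqrt r / r\<^sup>2" using r1 by (simp add: powr_half_sqrt divide_right_mono)
  also have "sqrt r / r\<^sup>2 = 1 / (r * sqrt r)"
    using r1 real_sqrt_mult_self[of r] by (simp add: field_simps power2_eq_square)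
  finally have rp: "r powr d / r\<^sup>2 \<le> 1 / (r * sqrt r)" .
  have "profile b s x * bridge_err lam b s x
      = (r powr d / r\<^sup>2) * (exp (- d * z) * (lam + 4 * (lam + b) ^ 4 * z\<^sup>2)) * profile (b - d) s x"
    unfolding split err by (simp add: field_simps)
  also have "\<dots> \<le> (1 / (r * sqrt r)) * (lam + 16 * (lam + b) ^ 4 / d\<^sup>2) * profile (b - d) s x"
    using rp core r1 b by (intro mult_right_mono mult_mono profile_nonneg) auto
  finally show ?thesis unfolding r_def by (simp add: algebra_simps)
qed

section \<open>Bounds near the final time\<close>

lemma witer_le_walk_prob:
  assumes "lam \<ge> 0" "s \<le> N"
  shows "witer (penalty lam) delta0 s (N - s) x \<le> walk_prob (N - s) x"
proof (rule witer_le_supersolution[where f = "\<lambda>j x. walk_prob (N - j) x"])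
  fix j x assume "j < N - s"
  then have "N - (s + j) = Suc (N - (s + j + 1))" by simp
  then show "wstep (penalty lam) (s + j) (walk_prob (N - (s + j + 1))) x \<le> walk_prob (N - (s + j)) x"
    using walk_prob_supersolution[OF assms(1)] by simp
qed (use assms in \<open>simp_all add: penalty_nonneg walk_prob_0\<close>)

text \<open>\<open>bridge_sq_bound L x\<close> bounds the expected sum of the squared positions of a bridge from \<open>x\<close> to \<open>0\<close> in
  \<open>L\<close> steps; by Jensen's inequality \<open>exp (- a \<cdot> bridge_sq_bound)\<close> bounds the penalised bridge
  from below when all penalties are at most \<open>a y\<^sup>2\<close>.\<close>

definition bridge_sq_bound :: "nat \<Rightarrow> int \<Rightarrow> real" where
  "bridge_sq_bound L x = real L * (real_of_int x)\<^sup>2 + real L * (real L + 1) / 2"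

lemma bridge_sq_bound_step:
  fixes L :: nat and x :: int
  defines "L' \<equiv> real (Suc L)" and "X \<equiv> real_of_int x"
  shows "((L' - X) * ((X + 1)\<^sup>2 + bridge_sq_bound L (x + 1)) + (L' + X) * ((X - 1)\<^sup>2 + bridge_sq_bound L (x - 1)))
           / (2 * L') \<le> bridge_sq_bound (Suc L) x"
proof -
  have "L' > 0" unfolding L'_def by simp
  then have "((L' - X) * ((X + 1)\<^sup>2 + bridge_sq_bound L (x + 1)) + (L' + X) * ((X - 1)\<^sup>2 + bridge_sq_bound L (x - 1)))
           / (2 * L') = L' * X\<^sup>2 - 2 * X\<^sup>2 + L' * (L' + 1) / 2"
    unfolding bridge_sq_bound_def L'_def X_def by (simp add: field_simps power2_eq_square)
  also have "\<dots> \<le> bridge_sq_bound (Suc L) x"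
    unfolding bridge_sq_bound_def L'_def X_def by simp
  finally show ?thesis .
qed

lemma exp_convex_comb:
  fixes p p' u v :: real
  assumes "p \<ge> 0" "p' \<ge> 0" "p + p' = 1"
  shows "exp (p * u + p' * v) \<le> p * exp u + p' * exp v"
  using convex_onD[OF exp_convex, of p' u v] assms by (simp add: eq_diff_eq[symmetric])

lemma penalty_ge_exp:
  assumes "lam \<ge> 0" "1 \<le> T" "T \<le> Suc s"
  shows "exp (- (lam / (real T)\<^sup>2) * (real_of_int y)\<^sup>2) \<le> penalty lam (Suc s) y"
proof -
  have "(real T)\<^sup>2 \<le> (real (Suc s))\<^sup>2" using assms by (intro power_mono) auto
  then have "lam / (real (Suc s))\<^sup>2 \<le> lam / (real T)\<^sup>2"
    using assms by (intro divide_left_mono) auto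
  then have "lam / (real (Suc s))\<^sup>2 * (real_of_int y)\<^sup>2 \<le> lam / (real T)\<^sup>2 * (real_of_int y)\<^sup>2"
    by (intro mult_right_mono) auto
  then show ?thesis unfolding penalty_def by simp
qed

lemma jensen_subsolution_step:
  fixes lam :: real and T s L :: nat
  defines "a \<equiv> lam / (real T)\<^sup>2"
  assumes lam: "lam \<ge> 0" and T: "1 \<le> T" "T \<le> s"
  shows "walk_prob (Suc L) x * exp (- a * bridge_sq_bound (Suc L) x)
    \<le> wstep (penalty lam) s (\<lambda>y. walk_prob L y * exp (- a * bridge_sq_bound L y)) x"
proof (cases rule: walk_prob_cases[of "Suc L" x])
  case 1
  then show ?thesis unfolding wstep_walk_prob_mult by simp
next
  case (2 k)
  define L' where "L' = real (Suc L)"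
  define X where "X = real_of_int x"
  define p where "p = (L' - X) / (2 * L')"
  define p' where "p' = (L' + X) / (2 * L')"
  define Y1 where "Y1 = (X + 1)\<^sup>2 + bridge_sq_bound L (x + 1)"
  define Y2 where "Y2 = (X - 1)\<^sup>2 + bridge_sq_bound L (x - 1)"
  have L'pos: "L' > 0" unfolding L'_def by simp
  have "X \<le> L'" "- L' \<le> X" unfolding X_def L'_def using 2 by auto
  then have p: "p \<ge> 0" "p' \<ge> 0" "p + p' = 1" unfolding p_def p'_def using L'pos by (auto simp: field_simps)
  have a0: "a \<ge> 0" unfolding a_def using lam by simp
  have step_term: "exp (- a * ((real_of_int y)\<^sup>2 + B)) \<le> penalty lam (Suc s) y * exp (- a * B)" for y B
  proof -
    have "exp (- a * ((real_of_int y)\<^sup>2 + B)) = exp (- a * (real_of_int y)\<^sup>2) * exp (- a * B)"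
      by (simp add: mult_exp_exp algebra_simps)
    then show ?thesis
      using penalty_ge_exp[OF lam T(1), of s y] T unfolding a_def by (simp add: mult_right_mono)
  qed
  have "p * Y1 + p' * Y2 = ((L' - X) * Y1 + (L' + X) * Y2) / (2 * L')"
    unfolding p_def p'_def using L'pos by (simp add: field_simps)
  then have "p * Y1 + p' * Y2 \<le> bridge_sq_bound (Suc L) x"
    using bridge_sq_bound_step[of L x] unfolding Y1_def Y2_def L'_def X_def by simp
  then have "exp (- a * bridge_sq_bound (Suc L) x) \<le> exp (- a * (p * Y1 + p' * Y2))"
    using a0 by (simp add: mult_left_mono)
  also have "\<dots> \<le> p * exp (- a * Y1) + p' * exp (- a * Y2)"
    using exp_convex_comb[OF p, of "- a * Y1" "- a * Y2"] by (simp add: algebra_simps)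
  also have "\<dots> \<le> p * (penalty lam (Suc s) (x + 1) * exp (- a * bridge_sq_bound L (x + 1)))
      + p' * (penalty lam (Suc s) (x - 1) * exp (- a * bridge_sq_bound L (x - 1)))"
    using step_term[of "x + 1" "bridge_sq_bound L (x + 1)"] step_term[of "x - 1" "bridge_sq_bound L (x - 1)"] p
    unfolding Y1_def Y2_def X_def by (intro add_mono mult_left_mono) auto
  also have "\<dots> = ((L' - X) * (penalty lam (Suc s) (x + 1) * exp (- a * bridge_sq_bound L (x + 1)))
      + (L' + X) * (penalty lam (Suc s) (x - 1) * exp (- a * bridge_sq_bound L (x - 1)))) / (2 * L')"
    unfolding p_def p'_def using L'pos by (simp add: field_simps)
  finally show ?thesis
    unfolding wstep_walk_prob_mult L'_def[symmetric] X_def[symmetric]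
    by (intro mult_left_mono walk_prob_nonneg)
qed

lemma witer_ge_jensen:
  fixes lam :: real and T s N :: nat
  defines "a \<equiv> lam / (real T)\<^sup>2"
  assumes lam: "lam \<ge> 0" and T: "1 \<le> T" "T \<le> s" "s \<le> N"
  shows "walk_prob (N - s) x * exp (- a * bridge_sq_bound (N - s) x) \<le> witer (penalty lam) delta0 s (N - s) x"
proof (rule witer_ge_subsolution[where f = "\<lambda>j x. walk_prob (N - j) x * exp (- a * bridge_sq_bound (N - j) x)"])
  fix j x assume "j < N - s"
  then have "N - (s + j) = Suc (N - (s + j + 1))" by simp
  then show "walk_prob (N - (s + j)) x * exp (- a * bridge_sq_bound (N - (s + j)) x)
      \<le> wstep (penalty lam) (s + j) (\<lambda>x. walk_prob (N - (s + j + 1)) x * exp (- a * bridge_sq_bound (N - (s + j + 1)) x)) x"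
    using jensen_subsolution_step[OF lam T(1), of "s + j"] T unfolding a_def by simp
qed (use T in \<open>simp_all add: penalty_nonneg walk_prob_0 bridge_sq_bound_def\<close>)

section \<open>Upper and lower bounds for the penalised walk\<close>

lemma witer_final_le_profile:
  assumes c: "0 \<le> c" "lam \<ge> 0" and l: "1 \<le> l" and cl: "8 * real l * c \<le> real T" and T: "1 \<le> T"
  shows "witer (penalty lam) delta0 T (2 * l) x \<le> walk_prob (2 * l) 0 / real T powr c * profile c T x"
proof -
  define X where "X = real_of_int x"
  have T0: "real T > 0" using T by simp
  have "c * X\<^sup>2 * (8 * real l) \<le> X\<^sup>2 * real T"
    using mult_right_mono[OF cl, of "X\<^sup>2"] by (simp add: algebra_simps)
  then have "c * X\<^sup>2 / real T \<le> X\<^sup>2 / (8 * real l)" using T0 l by (simp add: field_simps)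
  have "witer (penalty lam) delta0 T (2 * l) x \<le> walk_prob (2 * l) x"
    using witer_le_walk_prob[OF c(2), of T "T + 2 * l"] by simp
  also have "\<dots> \<le> walk_prob (2 * l) 0 * exp (- X\<^sup>2 / (8 * real l))"
    unfolding X_def using l by (rule walk_prob_le_gauss)
  also have "\<dots> \<le> walk_prob (2 * l) 0 * exp (- c * X\<^sup>2 / real T)"
    using \<open>c * X\<^sup>2 / real T \<le> _\<close> by (intro mult_left_mono walk_prob_nonneg) auto
  also have "\<dots> = walk_prob (2 * l) 0 / real T powr c * profile c T x"
    unfolding profile_def X_def using T0 by simp
  finally show ?thesis .
qed

lemma witer_upper_bound:
  fixes c lam :: real and t T N l :: nat
  assumes c: "0 \<le> c" "lam \<ge> 0" "lam - c - 2 * c\<^sup>2 > 0"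
    and t: "1 \<le> t" "t \<le> T" "T \<le> N" and l: "N - T = 2 * l" "1 \<le> l"
    and cl: "8 * real l * c \<le> real T" and thr: "real t + 1 \<ge> super_threshold c lam"
  shows "witer (penalty lam) delta0 t (N - t) 0 \<le> walk_prob (2 * l) 0 * (real t / real T) powr c"
proof -
  define C where "C = walk_prob (2 * l) 0 / real T powr c"
  have "C \<ge> 0" unfolding C_def by (simp add: walk_prob_nonneg)
  have "witer (penalty lam) delta0 t (N - t) 0 = witer (penalty lam) (witer (penalty lam) delta0 T (N - T)) t (T - t) 0"
    using witer_add[of "penalty lam" delta0 t "T - t" "N - T"] t by simp
  also have "\<dots> \<le> C * profile c t 0"
  proof (rule witer_le_supersolution[where f = "\<lambda>j x. C * profile c j x"])
    fix j x assume "j < T - t"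
    have "wstep (penalty lam) (t + j) (profile c (Suc (t + j))) x \<le> profile c (t + j) x"
      by (rule profile_supersolution[OF c]) (use t thr in simp_all)
    then show "wstep (penalty lam) (t + j) (\<lambda>x. C * profile c (t + j + 1) x) x \<le> C * profile c (t + j) x"
      using \<open>C \<ge> 0\<close> by (simp add: wstep_scale mult_left_mono)
  next
    fix x show "witer (penalty lam) delta0 T (N - T) x \<le> C * profile c (t + (T - t)) x"
      using witer_final_le_profile[OF c(1,2) l(2) cl, of x] t unfolding l(1) C_def by simp
  qed (simp add: penalty_nonneg)
  also have "C * profile c t 0 = walk_prob (2 * l) 0 * (real t / real T) powr c"
    unfolding C_def using t by (simp add: profile_at_0 powr_divide)
  finally show ?thesis .
qed

text \<open>The subsolution for the lower bound: the pinned profile minus a correction that absorbs the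
  accumulated errors \<open>bridge_err\<close>; the correction decays like \<open>s^(-1/2)\<close> relative to the main term.\<close>

definition lower_profile :: "real \<Rightarrow> real \<Rightarrow> real \<Rightarrow> nat \<Rightarrow> nat \<Rightarrow> int \<Rightarrow> real" where
  "lower_profile b d E N j x = walk_prob (N - j) x * profile b j x - E / sqrt (real j) * profile (b - d) j x"

lemma pinned_profile_subsolution:
  fixes b lam d Q :: real and s L :: nat
  defines "Kc \<equiv> lam + 16 * (lam + b) ^ 4 / d\<^sup>2"
  assumes b: "b > 0" "lam = b + 2 * b\<^sup>2" and d: "0 < d" "d \<le> 1/2" and s: "1 \<le> s"
    and Q: "0 \<le> Q" "walk_prob (Suc L) x \<le> Q" and thr: "real s + 1 \<ge> sub_threshold b lam"
  shows "walk_prob (Suc L) x * profile b s x - Q * (Kc / (real s * sqrt (real s)) * profile (b - d) s x)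
    \<le> wstep (penalty lam) s (\<lambda>y. walk_prob L y * profile b (Suc s) y) x"
proof -
  have lam0: "lam \<ge> 0" using b by simp
  have "walk_prob (Suc L) x * (profile b s x * (1 - bridge_err lam b s x))
      \<le> wstep (penalty lam) s (\<lambda>y. walk_prob L y * profile b (Suc s) y) x"
    unfolding wstep_walk_prob_mult
    by (intro mult_left_mono profile_bridge_subsolution b walk_prob_nonneg) (use s thr in simp_all)
  moreover have "walk_prob (Suc L) x * (profile b s x * bridge_err lam b s x) \<le> Q * (profile b s x * bridge_err lam b s x)"
    using Q lam0 by (intro mult_right_mono mult_nonneg_nonneg profile_nonneg) (simp_all add: bridge_err_def)
  moreover have "Q * (profile b s x * bridge_err lam b s x)
      \<le> Q * (Kc * (1 / (real s * sqrt (real s))) * profile (b - d) s x)"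
    unfolding Kc_def using Q(1) s by (intro mult_left_mono profile_bridge_err_le b(1) lam0 d) auto
  ultimately show ?thesis by (simp add: algebra_simps)
qed

lemma lower_profile_subsolution:
  fixes b lam d Q :: real and s N :: nat
  defines "Kc \<equiv> lam + 16 * (lam + b) ^ 4 / d\<^sup>2"
  assumes b: "b > 0" "lam = b + 2 * b\<^sup>2" and d: "0 < d" "d \<le> 1/2" "d < b"
    and s: "1 \<le> s" "s < N" and Q: "0 \<le> Q" "walk_prob (N - s) x \<le> Q"
    and thr: "real s + 1 \<ge> super_threshold (b - d) lam" "real s + 1 \<ge> sub_threshold b lam"
  shows "lower_profile b d (Q * (6 * Kc)) N s x \<le> wstep (penalty lam) s (lower_profile b d (Q * (6 * Kc)) N (Suc s)) x"
proof -
  define L where "L = N - Suc s"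
  have LL: "N - s = Suc L" unfolding L_def using s by simp
  have lam0: "lam \<ge> 0" using b by simp
  have Kc0: "Kc \<ge> 0" unfolding Kc_def using lam0 by simp
  have bd: "0 \<le> b - d" "lam - (b - d) - 2 * (b - d)\<^sup>2 > 0"
  proof -
    have "(b - d)\<^sup>2 < b\<^sup>2" using d b by (intro power_strict_mono) auto
    then show "lam - (b - d) - 2 * (b - d)\<^sup>2 > 0" using b d by simp
  qed (use d in simp)
  have main: "walk_prob (Suc L) x * profile b s x - Q * (Kc / (real s * sqrt (real s)) * profile (b - d) s x)
      \<le> wstep (penalty lam) s (\<lambda>y. walk_prob L y * profile b (Suc s) y) x"
    unfolding Kc_def using Q LL by (intro pinned_profile_subsolution b d(1,2) s(1) thr(2)) simp_all
  have "6 * Kc * (1 / (6 * (real s * sqrt (real s)))) \<le> 6 * Kc * (1 / sqrt (real s) - 1 / sqrt (real s + 1))"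
    using inverse_sqrt_diff_ge[of "real s"] Kc0 s by (intro mult_left_mono) auto
  then have correction: "Kc / (real s * sqrt (real s)) + 6 * Kc * (1 / sqrt (real (Suc s))) \<le> 6 * Kc * (1 / sqrt (real s))"
    by (simp add: algebra_simps)
  have super: "wstep (penalty lam) s (profile (b - d) (Suc s)) x \<le> profile (b - d) s x"
    by (rule profile_supersolution[OF bd(1) lam0 bd(2)]) (use s thr in simp_all)
  have "lower_profile b d (Q * (6 * Kc)) N s x
      = walk_prob (Suc L) x * profile b s x - Q * profile (b - d) s x * (6 * Kc * (1 / sqrt (real s)))"
    unfolding lower_profile_def LL by simp
  also have "\<dots> \<le> walk_prob (Suc L) x * profile b s x
      - Q * profile (b - d) s x * (Kc / (real s * sqrt (real s)) + 6 * Kc * (1 / sqrt (real (Suc s))))"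
    using correction Q(1) by (intro diff_left_mono mult_left_mono mult_nonneg_nonneg profile_nonneg) auto
  also have "\<dots> = (walk_prob (Suc L) x * profile b s x - Q * (Kc / (real s * sqrt (real s)) * profile (b - d) s x))
      - Q * (6 * Kc) / sqrt (real (Suc s)) * profile (b - d) s x"
    by (simp add: algebra_simps)
  also have "\<dots> \<le> wstep (penalty lam) s (\<lambda>y. walk_prob L y * profile b (Suc s) y) x
      - Q * (6 * Kc) / sqrt (real (Suc s)) * wstep (penalty lam) s (profile (b - d) (Suc s)) x"
    using main super Q(1) Kc0 by (intro diff_mono mult_left_mono) auto
  also have "\<dots> = wstep (penalty lam) s (lower_profile b d (Q * (6 * Kc)) N (Suc s)) x"
    unfolding lower_profile_def L_def
    by (simp add: wstep_diff[of _ _ "\<lambda>y. _ y * _ y"] wstep_scale[symmetric] wstep_def algebra_simps)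
  finally show ?thesis .
qed

lemma lower_profile_final:
  fixes b lam d E :: real and T N :: nat
  assumes lam0: "lam \<ge> 0" and E: "E \<ge> 0" and T: "1 \<le> T" "T \<le> N"
    and LT: "lam * real (N - T) \<le> b * real T" "N - T \<le> T"
  shows "exp (- lam) * real T powr (- b) * lower_profile b d E N T x \<le> witer (penalty lam) delta0 T (N - T) x"
proof -
  define L where "L = N - T"
  define X where "X = real_of_int x"
  define a where "a = lam / (real T)\<^sup>2"
  have T0: "real T \<ge> 1" using T by simp
  have "lam * real L / (real T)\<^sup>2 \<le> b * real T / (real T)\<^sup>2"
    using LT(1) unfolding L_def by (intro divide_right_mono) auto
  then have "lam * real L / (real T)\<^sup>2 * X\<^sup>2 \<le> b / real T * X\<^sup>2"
    using T0 by (intro mult_right_mono) (auto simp: power2_eq_square)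
  moreover have "real L * (real L + 1) / 2 \<le> (real T)\<^sup>2"
  proof -
    have "real L \<le> real T" using LT(2) unfolding L_def by simp
    then have "real L * (real L + 1) \<le> real T * (real T + 1)" by (intro mult_mono) auto
    also have "\<dots> \<le> 2 * (real T)\<^sup>2" using T0 by (simp add: power2_eq_square algebra_simps)
    finally show ?thesis by simp
  qed
  then have "lam * (real L * (real L + 1) / 2) / (real T)\<^sup>2 \<le> lam"
    using lam0 T0 by (simp add: divide_le_eq mult_left_mono)
  moreover have "a * bridge_sq_bound L x = (lam * real L / (real T)\<^sup>2) * X\<^sup>2 + lam * (real L * (real L + 1) / 2) / (real T)\<^sup>2"
    unfolding a_def bridge_sq_bound_def X_def using T0 by (simp add: field_simps)
  ultimately have jensen_exp: "a * bridge_sq_bound L x \<le> lam + b * X\<^sup>2 / real T" by simp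
  have "exp (- lam) * real T powr (- b) * lower_profile b d E N T x
      \<le> exp (- lam) * real T powr (- b) * (walk_prob L x * profile b T x)"
    unfolding lower_profile_def L_def using E by (intro mult_left_mono) (auto simp: profile_nonneg)
  also have "\<dots> = walk_prob L x * exp (- lam - b * X\<^sup>2 / real T)"
    unfolding profile_def X_def using T0
    by (simp add: powr_minus field_simps mult_exp_exp flip: exp_add)
  also have "\<dots> \<le> walk_prob L x * exp (- a * bridge_sq_bound L x)"
    using jensen_exp by (intro mult_left_mono walk_prob_nonneg) auto
  also have "\<dots> \<le> witer (penalty lam) delta0 T (N - T) x"
    unfolding L_def a_def using witer_ge_jensen[OF lam0 T(1) order_refl T(2)] by simp
  finally show ?thesis .
qed

lemma witer_lower_bound:
  fixes b lam d Q :: real and t T N :: nat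
  defines "E \<equiv> Q * (6 * (lam + 16 * (lam + b) ^ 4 / d\<^sup>2))"
  assumes b: "b > 0" "lam = b + 2 * b\<^sup>2" and d: "0 < d" "d \<le> 1/2" "d < b"
    and t: "1 \<le> t" "t \<le> T" "T \<le> N"
    and thr: "real t + 1 \<ge> super_threshold (b - d) lam" "real t + 1 \<ge> sub_threshold b lam"
    and Q: "Q \<ge> 0" "\<And>s y. t \<le> s \<Longrightarrow> s \<le> T \<Longrightarrow> walk_prob (N - s) y \<le> Q"
    and LT: "lam * real (N - T) \<le> b * real T" "N - T \<le> T"
  shows "exp (- lam) * real T powr (- b) * lower_profile b d E N t 0 \<le> witer (penalty lam) delta0 t (N - t) 0"
proof -
  define ka where "ka = exp (- lam) * real T powr (- b)"
  have "ka \<ge> 0" unfolding ka_def by simp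
  have "ka * lower_profile b d E N t 0 \<le> witer (penalty lam) (witer (penalty lam) delta0 T (N - T)) t (T - t) 0"
  proof (rule witer_ge_subsolution[where f = "\<lambda>j x. ka * lower_profile b d E N j x"])
    fix j x assume "j < T - t"
    then have "lower_profile b d E N (t + j) x \<le> wstep (penalty lam) (t + j) (lower_profile b d E N (Suc (t + j))) x"
      unfolding E_def using t thr Q by (intro lower_profile_subsolution b d) simp_all
    then show "ka * lower_profile b d E N (t + j) x \<le> wstep (penalty lam) (t + j) (\<lambda>x. ka * lower_profile b d E N (t + j + 1) x) x"
      using \<open>ka \<ge> 0\<close> by (simp add: wstep_scale mult_left_mono)
  next
    fix x show "ka * lower_profile b d E N (t + (T - t)) x \<le> witer (penalty lam) delta0 T (N - T) x"
      unfolding ka_def using lower_profile_final[OF _ _ _ t(3) LT] b Q(1) t unfolding E_def by simp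
  qed (simp add: penalty_nonneg)
  also have "\<dots> = witer (penalty lam) delta0 t (N - t) 0"
    using witer_add[of "penalty lam" delta0 t "T - t" "N - T"] t by simp
  finally show ?thesis unfolding ka_def .
qed

section \<open>Choice of scales\<close>

text \<open>For \<open>n\<close> large: the penalty starts at \<open>t0 = 2 A - 2\<close>; the last \<open>2 l\<close> steps, \<open>l = n div K0\<close>,
  are handled by the walk estimates of the previous section, and the profiles are propagated
  between \<open>t0\<close> and \<open>T = N - 2 l\<close>.  The constant \<open>K0\<close> makes the final stretch short compared to
  \<open>T\<close>, yet long enough that the central probabilities at \<open>2 l\<close> and \<open>N - t0\<close> are comparable.\<close>

locale scales =
  fixes b :: real and n K0 :: nat
  assumes b: "b > 0" and K0: "real K0 \<ge> 12 * b + 4" and n: "n \<ge> 2 * K0"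
    and A2: "Apar n \<ge> 2" and Al: "Apar n + n div K0 \<le> n"
begin

abbreviation "lam \<equiv> b + 2 * b\<^sup>2"
abbreviation "t0 \<equiv> 2 * Apar n - 2"
abbreviation "N \<equiv> 2 * n - 2"
abbreviation "l \<equiv> n div K0"
abbreviation "T \<equiv> N - 2 * l"
abbreviation "m \<equiv> n - Apar n"

lemma K0_ge_4: "K0 \<ge> 4"
  using K0 b by simp

lemma l_ge_1: "l \<ge> 1"
  using n K0_ge_4 by (simp add: Suc_le_eq div_greater_zero_iff)

lemma K0_l_le_n: "real K0 * real l \<le> real n"
  by (metis of_nat_le_iff of_nat_mult times_div_less_eq_dividend)

lemma n_le_2_K0_l: "real n \<le> 2 * real K0 * real l"
proof -
  have "n mod K0 < K0" using K0_ge_4 by simp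
  moreover have "n = K0 * l + n mod K0" by simp
  ultimately have "n < K0 * l + K0" by linarith
  then have "real n < real (K0 * l + K0)" by (simp only: of_nat_less_iff)
  then have "real n \<le> real K0 * real l + real K0" by simp
  moreover have "real K0 * 1 \<le> real K0 * real l" using l_ge_1 by (intro mult_left_mono) auto
  ultimately show ?thesis by simp
qed

lemma scaled_l_le_T: "(12 * b + 2) * real l \<le> real T" and n_le_T: "real n \<le> real T" and T_le: "real T \<le> 2 * real n"
proof -
  have "(12 * b + 2) * real l \<le> real K0 * real l" using K0 by (intro mult_right_mono) auto
  then have Rl: "(12 * b + 2) * real l \<le> real n" using K0_l_le_n by simp
  have "4 * real l \<le> real K0 * real l" using K0_ge_4 by (intro mult_right_mono) auto
  then have "real l \<le> real n / 4" using K0_l_le_n by simp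
  moreover have "2 * l \<le> 2 * n - 2" using Al A2 by simp
  moreover have "real n \<ge> 8" using n K0_ge_4 by simp
  ultimately show "real n \<le> real T" "real T \<le> 2 * real n" by (simp_all add: of_nat_diff)
  with Rl show "(12 * b + 2) * real l \<le> real T" by simp
qed

lemma t0_le_T: "t0 \<le> T"
  using Al A2 by simp

lemma T_ge_1: "1 \<le> T"
  using n_le_T n K0_ge_4 by simp

lemma N_minus_T: "N - T = 2 * l"
  using Al A2 by simp

lemma N_minus_t0: "N - t0 = 2 * m"
  using Al A2 by simp

lemma lam_N_minus_T_le: "lam * real (N - T) \<le> b * real T"
proof -
  have "lam * real (N - T) = (2 * b + 4 * b\<^sup>2) * real l" unfolding N_minus_T by (simp add: algebra_simps)
  also have "\<dots> \<le> (b * (12 * b + 2)) * real l"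
    using b by (intro mult_right_mono) (simp_all add: power2_eq_square algebra_simps)
  also have "\<dots> = b * ((12 * b + 2) * real l)" by (simp only: mult.assoc)
  also have "\<dots> \<le> b * real T" using scaled_l_le_T b by (intro mult_left_mono) auto
  finally show ?thesis .
qed

lemma N_minus_T_le_T: "N - T \<le> T"
proof -
  have "real (2 * l) \<le> (12 * b + 2) * real l" using b by (simp add: algebra_simps)
  then show ?thesis using scaled_l_le_T unfolding N_minus_T by linarith
qed

lemma walk_prob_central_ratio: "walk_prob (2 * l) 0 \<le> sqrt (2 * real K0) * walk_prob (2 * m) 0"
proof -
  define a where "a = walk_prob (2 * l) 0"
  define c where "c = walk_prob (2 * m) 0"
  have "a\<^sup>2 * real l \<le> c\<^sup>2 * real m"
    unfolding a_def c_def using Al by (intro walk_prob_central_sq_mono) simp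
  also have "\<dots> \<le> c\<^sup>2 * real n" by (intro mult_left_mono) auto
  also have "\<dots> \<le> c\<^sup>2 * (2 * real K0 * real l)" by (intro mult_left_mono n_le_2_K0_l) auto
  also have "\<dots> = (c\<^sup>2 * (2 * real K0)) * real l" by (simp only: mult.assoc)
  finally have "a\<^sup>2 \<le> c\<^sup>2 * (2 * real K0)"
    by (rule mult_right_le_imp_le) (use l_ge_1 in simp)
  also have "\<dots> = (sqrt (2 * real K0) * c)\<^sup>2" by (simp add: power_mult_distrib)
  finally have "a\<^sup>2 \<le> (sqrt (2 * real K0) * c)\<^sup>2" .
  moreover have "sqrt (2 * real K0) * c \<ge> 0" unfolding c_def by (simp add: walk_prob_nonneg)
  ultimately show ?thesis unfolding a_def c_def by (rule power2_le_imp_le)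
qed

lemma condE_scales: "condE lam n = witer (penalty lam) delta0 t0 (N - t0) 0 / walk_prob (2 * m) 0"
  using condE_eq_witer[of n lam] A2 Al unfolding N_minus_t0 by simp

lemma condE_upper:
  assumes c: "0 \<le> c" "c < b" and thr: "real t0 + 1 \<ge> super_threshold c lam"
  shows "condE lam n \<le> sqrt (2 * real K0) * (real t0 / real T) powr c"
proof -
  have "c\<^sup>2 \<le> b\<^sup>2" using c by (intro power_mono) auto
  then have c': "lam - c - 2 * c\<^sup>2 > 0" using c by linarith
  have "8 * real l * c \<le> 8 * real l * b" using c by (intro mult_left_mono) auto
  also have "\<dots> \<le> (12 * b + 2) * real l" using b by (simp add: algebra_simps)
  finally have "8 * real l * c \<le> (12 * b + 2) * real l" .
  then have cl: "8 * real l * c \<le> real T" using scaled_l_le_T by linarith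
  have qm: "walk_prob (2 * m) 0 > 0" by (rule walk_prob_central_pos)
  have "condE lam n \<le> walk_prob (2 * l) 0 * (real t0 / real T) powr c / walk_prob (2 * m) 0"
    unfolding condE_scales using qm A2 b
    by (intro divide_right_mono witer_upper_bound[OF c(1) _ c' _ t0_le_T _ N_minus_T l_ge_1 cl thr]) simp_all
  also have "\<dots> \<le> sqrt (2 * real K0) * walk_prob (2 * m) 0 * (real t0 / real T) powr c / walk_prob (2 * m) 0"
    using walk_prob_central_ratio qm by (intro divide_right_mono mult_right_mono) auto
  also have "\<dots> = sqrt (2 * real K0) * (real t0 / real T) powr c" using qm by simp
  finally show ?thesis .
qed

definition d :: real where "d = min b 1 / 2"
definition D :: real where "D = 6 * (lam + 16 * (lam + b) ^ 4 / d\<^sup>2)"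

lemma d_bounds: "0 < d" "d \<le> 1/2" "d < b"
  unfolding d_def using b by auto

lemma lower_correction_le:
  assumes big: "2 * sqrt (2 * real K0) * D \<le> real t0 powr (d + 1/2)"
  shows "walk_prob (2 * l) 0 * D * (1 / sqrt (real t0)) * real t0 powr (b - d) \<le> walk_prob (2 * m) 0 * real t0 powr b / 2"
proof -
  have rt: "real t0 \<ge> 1" using A2 by simp
  have D0: "D \<ge> 0" unfolding D_def using b by (intro mult_nonneg_nonneg add_nonneg_nonneg divide_nonneg_nonneg) auto
  have "walk_prob (2 * l) 0 * D * (1 / sqrt (real t0)) * real t0 powr (b - d)
      = walk_prob (2 * l) 0 * D * real t0 powr (b - d - 1/2)"
    using rt by (simp add: powr_half_sqrt[symmetric] powr_diff)
  also have "\<dots> \<le> (sqrt (2 * real K0) * walk_prob (2 * m) 0) * D * real t0 powr (b - d - 1/2)"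
    using walk_prob_central_ratio D0 by (intro mult_right_mono) auto
  also have "\<dots> = walk_prob (2 * m) 0 * (sqrt (2 * real K0) * D) * real t0 powr (b - d - 1/2)"
    by (simp only: mult_ac)
  also have "\<dots> \<le> walk_prob (2 * m) 0 * (real t0 powr (d + 1/2) / 2) * real t0 powr (b - d - 1/2)"
    using big walk_prob_central_pos[of m] by (intro mult_right_mono mult_left_mono) auto
  also have "\<dots> = walk_prob (2 * m) 0 * real t0 powr b / 2"
    by (simp add: powr_add[symmetric])
  finally show ?thesis .
qed

lemma condE_lower:
  assumes thr: "real t0 + 1 \<ge> super_threshold (b - d) lam" "real t0 + 1 \<ge> sub_threshold b lam"
    and big: "2 * sqrt (2 * real K0) * D \<le> real t0 powr (d + 1/2)"
  shows "exp (- lam) * real T powr (- b) / 2 \<le> condE lam n"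
proof -
  define Q where "Q = walk_prob (2 * l) 0"
  have Q0: "Q \<ge> 0" unfolding Q_def by (rule walk_prob_nonneg)
  have Qb: "walk_prob (N - s) y \<le> Q" if "t0 \<le> s" "s \<le> T" for s y
  proof -
    have "N - s = 2 * l + (T - s)" using that N_minus_T by simp
    then show ?thesis
      unfolding Q_def using walk_prob_bound_mono[OF walk_prob_le_central] by simp
  qed
  have rt: "real t0 \<ge> 1" using A2 by simp
  have qm: "walk_prob (2 * m) 0 > 0" by (rule walk_prob_central_pos)
  have err: "Q * D * (1 / sqrt (real t0)) * real t0 powr (b - d) \<le> walk_prob (2 * m) 0 * real t0 powr b / 2"
    unfolding Q_def using big by (rule lower_correction_le)
  have "exp (- lam) * real T powr (- b) * (walk_prob (2 * m) 0 * real t0 powr b / 2)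
      \<le> exp (- lam) * real T powr (- b) * lower_profile b d (Q * D) N t0 0"
    using err rt unfolding lower_profile_def N_minus_t0 D_def
    by (intro mult_left_mono) (simp_all add: profile_at_0)
  also have "\<dots> \<le> witer (penalty lam) delta0 t0 (N - t0) 0"
    unfolding D_def using b d_bounds A2 t0_le_T thr Q0 Qb lam_N_minus_T_le N_minus_T_le_T
    by (intro witer_lower_bound) simp_all
  finally have L: "exp (- lam) * real T powr (- b) * (walk_prob (2 * m) 0 * real t0 powr b / 2)
      \<le> witer (penalty lam) delta0 t0 (N - t0) 0" .
  have "real t0 powr b \<ge> 1" using rt b by (simp add: ge_one_powr_ge_zero)
  then have "exp (- lam) * real T powr (- b) / 2 * walk_prob (2 * m) 0
      \<le> exp (- lam) * real T powr (- b) * (walk_prob (2 * m) 0 * real t0 powr b / 2)"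
    using qm by (simp add: mult_left_mono)
  with L have "exp (- lam) * real T powr (- b) / 2 * walk_prob (2 * m) 0 \<le> witer (penalty lam) delta0 t0 (N - t0) 0"
    by linarith
  then show ?thesis
    unfolding condE_scales using qm by (simp add: pos_le_divide_eq)
qed

end

section \<open>Asymptotics\<close>

lemma Apar_le: "real (Apar n) \<le> (ln (real n)) ^ 10"
proof -
  have "(ln (real n)) ^ 10 \<ge> 0" by (simp add: zero_le_even_power)
  then show ?thesis unfolding Apar_def by linarith
qed

lemma eventually_Apar_ge: "eventually (\<lambda>n. M \<le> Apar n) sequentially"
proof -
  have "filterlim (\<lambda>n::nat. (ln (real n)) ^ 10) at_top sequentially" by real_asymp
  then have "eventually (\<lambda>n. real M + 1 \<le> (ln (real n)) ^ 10) sequentially"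
    by (simp add: filterlim_at_top)
  then show ?thesis
    by eventually_elim (simp add: Apar_def le_nat_iff le_floor_iff)
qed

lemma eventually_t0_ge: "eventually (\<lambda>n. X \<le> real (2 * Apar n - 2)) sequentially"
  using eventually_Apar_ge[of "nat \<lceil>X\<rceil> + 2"] by eventually_elim linarith

lemma eventually_scales:
  assumes "b > 0" "real K0 \<ge> 12 * b + 4"
  shows "eventually (\<lambda>n. scales b n K0) sequentially"
proof -
  have K0: "K0 \<ge> 4" using assms by simp
  have "eventually (\<lambda>n::nat. (ln (real n)) ^ 10 \<le> real n / 2) sequentially" by real_asymp
  moreover have "eventually (\<lambda>n. 2 * K0 \<le> n) sequentially" by (rule eventually_ge_at_top)
  ultimately show ?thesis using eventually_Apar_ge[of 2]
  proof eventually_elim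
    case (elim n)
    have "4 * (n div K0) \<le> K0 * (n div K0)" using K0 by (intro mult_right_mono) auto
    also have "\<dots> \<le> n" by simp
    finally have "real (n div K0) \<le> real n / 4" by linarith
    then have "Apar n + n div K0 \<le> n" using Apar_le[of n] elim(1) by linarith
    then show ?case using elim assms by unfold_locales auto
  qed
qed

lemma condE_lower_asymp:
  assumes b: "b > 0"
  shows "\<exists>K > 0. eventually (\<lambda>n. K * real n powr (- b) \<le> condE (b + 2 * b\<^sup>2) n) sequentially"
proof -
  define lam where "lam = b + 2 * b\<^sup>2"
  define K0 where "K0 = nat \<lceil>12 * b + 4\<rceil>"
  have K0: "real K0 \<ge> 12 * b + 4" unfolding K0_def by linarith
  define K where "K = exp (- lam) * 2 powr (- b) / 2"
  have "eventually (\<lambda>n. real (2 * Apar n - 2) \<ge> max (super_threshold (b - scales.d b) lam) (sub_threshold b lam)) sequentially"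
    "eventually (\<lambda>n. real (2 * Apar n - 2) \<ge> (2 * sqrt (2 * real K0) * scales.D b)\<^sup>2 + 1) sequentially"
    by (rule eventually_t0_ge)+
  with eventually_scales[OF b K0] have "eventually (\<lambda>n. K * real n powr (- b) \<le> condE lam n) sequentially"
  proof eventually_elim
    case (elim n)
    interpret scales b n K0 by (rule elim(1))
    have t1: "real t0 \<ge> 1" using A2 by simp
    have "2 * sqrt (2 * real K0) * D \<le> sqrt (real t0)"
      using elim(3) by (intro real_le_rsqrt) linarith
    also have "\<dots> = real t0 powr (1/2)" using t1 by (simp add: powr_half_sqrt)
    also have "\<dots> \<le> real t0 powr (d + 1/2)" using t1 d_bounds by (intro powr_mono) auto
    finally have lower: "exp (- lam) * real T powr (- b) / 2 \<le> condE lam n"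
      using elim(2) unfolding lam_def by (intro condE_lower) auto
    have "(2 * real n) powr (- b) \<le> real T powr (- b)"
      using n_le_T T_le b T_ge_1 by (intro powr_mono2') auto
    then have "exp (- lam) * (2 * real n) powr (- b) / 2 \<le> exp (- lam) * real T powr (- b) / 2"
      by (intro divide_right_mono mult_left_mono) auto
    also note lower
    finally show ?case
      unfolding K_def by (simp add: powr_mult mult_ac)
  qed
  moreover have "K > 0" unfolding K_def by simp
  ultimately show ?thesis unfolding lam_def by blast
qed

lemma condE_upper_asymp:
  assumes b: "b > 0" and c: "0 \<le> c" "c < b"
  shows "\<exists>K > 0. eventually (\<lambda>n. condE (b + 2 * b\<^sup>2) n \<le> K * ((ln (real n)) ^ 10 / real n) powr c) sequentially"
proof -
  define K0 where "K0 = nat \<lceil>12 * b + 4\<rceil>"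
  have K0: "real K0 \<ge> 12 * b + 4" unfolding K0_def by linarith
  define K where "K = sqrt (2 * real K0) * 2 powr c"
  have "eventually (\<lambda>n. real (2 * Apar n - 2) \<ge> super_threshold c (b + 2 * b\<^sup>2)) sequentially"
    by (rule eventually_t0_ge)
  with eventually_scales[OF b K0]
  have "eventually (\<lambda>n. condE (b + 2 * b\<^sup>2) n \<le> K * ((ln (real n)) ^ 10 / real n) powr c) sequentially"
  proof eventually_elim
    case (elim n)
    interpret scales b n K0 by (rule elim(1))
    have "real t0 \<le> 2 * (ln (real n)) ^ 10" using Apar_le[of n] by simp
    then have "real t0 / real T \<le> 2 * (ln (real n)) ^ 10 / real n"
      using n_le_T n K0_ge_4 by (intro frac_le) auto
    then have "(real t0 / real T) powr c \<le> (2 * ((ln (real n)) ^ 10 / real n)) powr c"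
      using c(1) by (intro powr_mono2) auto
    then have "condE lam n \<le> sqrt (2 * real K0) * (2 * ((ln (real n)) ^ 10 / real n)) powr c"
      using condE_upper[OF c] elim(2) by (smt (verit) mult_left_mono real_sqrt_ge_zero of_nat_0_le_iff)
    moreover have "(2 * ((ln (real n)) ^ 10 / real n)) powr c = 2 powr c * ((ln (real n)) ^ 10 / real n) powr c"
      using powr_mult[of 2 "(ln (real n)) ^ 10 / real n" c] by simp
    ultimately show ?case unfolding K_def by (simp only: mult.assoc)
  qed
  moreover have "K > 0" unfolding K_def using K0 b by simp
  ultimately show ?thesis by blast
qed

lemma eventually_ln_div_ln_gt:
  fixes f :: "nat \<Rightarrow> real"
  assumes K: "K > 0" and lower: "eventually (\<lambda>n. K * real n powr (- b) \<le> f n) sequentially" and e: "e > 0"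
  shows "eventually (\<lambda>n. - b - e < ln (f n) / ln (real n)) sequentially"
proof -
  have "((\<lambda>n. ln K / ln (real n) - b) \<longlongrightarrow> - b) sequentially" by real_asymp
  then have "eventually (\<lambda>n. - b - e < ln K / ln (real n) - b) sequentially"
    by (rule order_tendstoD) (use e in simp)
  with lower eventually_gt_at_top[of 2] show ?thesis
  proof eventually_elim
    case (elim n)
    have "ln K - b * ln (real n) = ln (K * real n powr (- b))"
      using K elim(2) by (simp add: ln_mult ln_powr)
    also have "\<dots> \<le> ln (f n)" using elim(1) K elim(2) by (intro ln_mono) simp_all
    finally have "(ln K - b * ln (real n)) / ln (real n) \<le> ln (f n) / ln (real n)"
      using elim(2) by (intro divide_right_mono) auto
    moreover have "(ln K - b * ln (real n)) / ln (real n) = ln K / ln (real n) - b"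
      using elim(2) by (simp add: diff_divide_distrib)
    ultimately show ?case using elim(3) by linarith
  qed
qed

lemma eventually_ln_div_ln_lt:
  fixes f :: "nat \<Rightarrow> real" and p :: nat
  assumes K: "K > 0" and upper: "eventually (\<lambda>n. f n \<le> K * ((ln (real n)) ^ p / real n) powr c) sequentially"
    and pos: "eventually (\<lambda>n. 0 < f n) sequentially" and e: "e > 0"
  shows "eventually (\<lambda>n. ln (f n) / ln (real n) < - c + e) sequentially"
proof -
  have "((\<lambda>n. ln K / ln (real n) + c * real p * (ln (ln (real n)) / ln (real n)) - c) \<longlongrightarrow> - c) sequentially"
    by real_asymp
  then have "eventually (\<lambda>n. ln K / ln (real n) + c * real p * (ln (ln (real n)) / ln (real n)) - c < - c + e) sequentially"
    by (rule order_tendstoD) (use e in simp)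
  with upper pos eventually_gt_at_top[of 1] show ?thesis
  proof eventually_elim
    case (elim n)
    have ln_pos: "ln (real n) > 0" using elim(3) by simp
    have "ln (f n) \<le> ln (K * ((ln (real n)) ^ p / real n) powr c)" using elim(1,2) by simp
    also have "\<dots> = ln K + c * (real p * ln (ln (real n)) - ln (real n))"
      using K ln_pos elim(3) by (simp add: ln_mult ln_powr ln_div ln_realpow)
    finally have "ln (f n) / ln (real n) \<le> (ln K + c * (real p * ln (ln (real n)) - ln (real n))) / ln (real n)"
      using ln_pos by (intro divide_right_mono) auto
    also have "\<dots> = ln K / ln (real n) + c * real p * (ln (ln (real n)) / ln (real n)) - c"
      using ln_pos by (simp add: add_divide_distrib diff_divide_distrib algebra_simps)
    finally show ?case using elim(4) by linarith
  qed
qed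

lemma tendsto_ln_div_ln:
  fixes f :: "nat \<Rightarrow> real" and b :: real and p :: nat
  assumes b: "b > 0"
    and lower: "K > 0" "eventually (\<lambda>n. K * real n powr (- b) \<le> f n) sequentially"
    and upper: "\<And>c. 0 \<le> c \<Longrightarrow> c < b \<Longrightarrow>
      \<exists>K' > 0. eventually (\<lambda>n. f n \<le> K' * ((ln (real n)) ^ p / real n) powr c) sequentially"
  shows "(\<lambda>n. ln (f n) / ln (real n)) \<longlonglongrightarrow> - b"
proof (rule tendstoI)
  fix e :: real assume e: "e > 0"
  have pos: "eventually (\<lambda>n. 0 < f n) sequentially"
    using lower(2) eventually_gt_at_top[of 0]
    by eventually_elim (use lower(1) in \<open>auto intro: less_le_trans[rotated]\<close>)
  define c where "c = b - min e b / 2"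
  have c: "0 \<le> c" "c < b" "b - c \<le> e / 2" unfolding c_def using e b by auto
  obtain K' where "K' > 0" "eventually (\<lambda>n. f n \<le> K' * ((ln (real n)) ^ p / real n) powr c) sequentially"
    using upper[OF c(1,2)] by blast
  from eventually_ln_div_ln_lt[OF this pos half_gt_zero[OF e]] eventually_ln_div_ln_gt[OF lower e]
  show "eventually (\<lambda>n. dist (ln (f n) / ln (real n)) (- b) < e) sequentially"
    by eventually_elim (use c(3) in \<open>auto simp: dist_real_def abs_less_iff\<close>)
qed

lemma eventually_eq_powr_exponent:
  fixes f :: "nat \<Rightarrow> real"
  assumes lim: "(\<lambda>n. ln (f n) / ln (real n)) \<longlonglongrightarrow> a" and pos: "eventually (\<lambda>n. f n > 0) sequentially"
  shows "\<exists>g. g \<longlonglongrightarrow> 0 \<and> eventually (\<lambda>n. f n = real n powr (a + g n)) sequentially"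
proof (intro exI conjI)
  show "(\<lambda>n. ln (f n) / ln (real n) - a) \<longlonglongrightarrow> 0"
    using tendsto_diff[OF lim tendsto_const[of a]] by simp
  from pos eventually_gt_at_top[of 1]
  show "eventually (\<lambda>n. f n = real n powr (a + (ln (f n) / ln (real n) - a))) sequentially"
    by eventually_elim (simp add: powr_def)
qed

theorem mainTheorem12:
  fixes \<alpha> :: real
  assumes "\<alpha> > 1"
  shows "\<exists>g :: nat \<Rightarrow> real. (g \<longlonglongrightarrow> 0) \<and>
           (\<forall>\<^sub>F n in sequentially.
              condE (\<alpha> * (\<alpha> - 1) / 2) n = real n powr (- (\<alpha> - 1) / 2 + g n))"
proof -
  define b where "b = (\<alpha> - 1) / 2"
  have b: "b > 0" unfolding b_def using assms by simp
  have lam: "\<alpha> * (\<alpha> - 1) / 2 = b + 2 * b\<^sup>2" unfolding b_def by (simp add: field_simps power2_eq_square)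
  obtain K where K: "K > 0" "eventually (\<lambda>n. K * real n powr (- b) \<le> condE (b + 2 * b\<^sup>2) n) sequentially"
    using condE_lower_asymp[OF b] by blast
  have "(\<lambda>n. ln (condE (b + 2 * b\<^sup>2) n) / ln (real n)) \<longlonglongrightarrow> - b"
    using b K condE_upper_asymp[OF b] by (rule tendsto_ln_div_ln)
  moreover have "eventually (\<lambda>n. condE (b + 2 * b\<^sup>2) n > 0) sequentially"
    using K(2) eventually_gt_at_top[of 0]
    by eventually_elim (use K(1) in \<open>auto intro: less_le_trans[rotated]\<close>)
  ultimately obtain g where "g \<longlonglongrightarrow> 0"
    "eventually (\<lambda>n. condE (b + 2 * b\<^sup>2) n = real n powr (- b + g n)) sequentially"
    using eventually_eq_powr_exponent by blast
  moreover have "- b = - (\<alpha> - 1) / 2" unfolding b_def by (simp only: minus_divide_left)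
  ultimately show ?thesis unfolding lam by auto
qed

end
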